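(* Let $n\in\mathbb{N}$. For every $m\in\mathbb{N}_0$, $\dim E_m=d_m$.
   Context: Let $L_n\subseteq(\mathbb{C}^2)^{\otimes n}$ be the symmetric tensors ($\dim L_n=n+1$) and $\rho_n$ the restriction to $L_n$ of the $n$-fold tensor power of the fundamental representation of $SU(2)$; $D_2\subseteq L_n\otimes L_n$ is the subspace of $\rho_n\otimes\rho_n$-invariant vectors. For $m\ge2$, $E_m=\big(\sum_{i=1}^{m-1}L_n^{\otimes(i-1)}\otimes D_2\otimes L_n^{\otimes(m-i-1)}\big)^\perp\subseteq L_n^{\otimes m}$, $E_1=L_n$, $E_0=\mathbb{C}$. The integers $d_m$ are defined by $d_0=1$, $d_1=n+1$, $d_m=(n+1)d_{m-1}-d_{m-2}$ for $m\ge2$. *)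

theory Defs
  imports Complex_Main "HOL-Library.Function_Algebras" "HOL-Combinatorics.Permutations"
begin

text \<open>A vector of (C^2)^{tensor N} is a function on bool lists,
  supported on the lists of length N (basis e_False, e_True of C^2).
  Concatenation of index lists realises the tensor product, so
  ((C^2)^{tensor n})^{tensor m} = (C^2)^{tensor (n*m)}.\<close>

definition cscale :: "complex \<Rightarrow> (bool list \<Rightarrow> complex) \<Rightarrow> (bool list \<Rightarrow> complex)" where
  "cscale c f = (\<lambda>xs. c * f xs)"

abbreviation cspan :: "(bool list \<Rightarrow> complex) set \<Rightarrow> (bool list \<Rightarrow> complex) set" where
  "cspan \<equiv> module.span cscale"

abbreviation cdim :: "(bool list \<Rightarrow> complex) set \<Rightarrow> nat" where
  "cdim \<equiv> vector_space.dim cscale"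

definition tens :: "nat \<Rightarrow> (bool list \<Rightarrow> complex) set" where
  "tens N = {f. \<forall>xs. length xs \<noteq> N \<longrightarrow> f xs = 0}"

definition cinner :: "nat \<Rightarrow> (bool list \<Rightarrow> complex) \<Rightarrow> (bool list \<Rightarrow> complex) \<Rightarrow> complex" where
  "cinner N f h = (\<Sum>xs\<in>{xs. length xs = N}. f xs * cnj (h xs))"

definition tprod :: "nat \<Rightarrow> (bool list \<Rightarrow> complex) set \<Rightarrow> (bool list \<Rightarrow> complex) set
    \<Rightarrow> (bool list \<Rightarrow> complex) set" where
  "tprod N A B = cspan {(\<lambda>xs. a (take N xs) * b (drop N xs)) | a b. a \<in> A \<and> b \<in> B}"

definition Lsym :: "nat \<Rightarrow> (bool list \<Rightarrow> complex) set" where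
  "Lsym n = {f \<in> tens n. \<forall>\<sigma> xs. \<sigma> permutes {..<n} \<longrightarrow> length xs = n \<longrightarrow>
       f (map (\<lambda>k. xs ! \<sigma> k) [0..<n]) = f xs}"

definition unitv :: "bool list \<Rightarrow> complex" where
  "unitv xs = (if xs = [] then 1 else 0)"

fun Lpow :: "nat \<Rightarrow> nat \<Rightarrow> (bool list \<Rightarrow> complex) set" where
  "Lpow n 0 = cspan {unitv}"
| "Lpow n (Suc m) = tprod n (Lsym n) (Lpow n m)"

definition SU2 :: "(bool \<Rightarrow> bool \<Rightarrow> complex) set" where
  "SU2 = {g. (\<forall>i j. (\<Sum>k\<in>UNIV. g i k * cnj (g j k)) = (if i = j then 1 else 0))
            \<and> g False False * g True True - g False True * g True False = 1}"

definition tact :: "(bool \<Rightarrow> bool \<Rightarrow> complex) \<Rightarrow> (bool list \<Rightarrow> complex) \<Rightarrow> (bool list \<Rightarrow> complex)" where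
  "tact g f = (\<lambda>xs. \<Sum>ys\<in>{ys. length ys = length xs}.
      (\<Prod>k<length xs. g (xs ! k) (ys ! k)) * f ys)"

definition D2 :: "nat \<Rightarrow> (bool list \<Rightarrow> complex) set" where
  "D2 n = {f \<in> tprod n (Lsym n) (Lsym n). \<forall>g\<in>SU2. tact g f = f}"

definition Espace :: "nat \<Rightarrow> nat \<Rightarrow> (bool list \<Rightarrow> complex) set" where
  "Espace n m =
    (if m = 0 then cspan {unitv}
     else if m = 1 then Lsym n
     else (let S = cspan (\<Union>i\<in>{1..m-1}.
                 tprod (n * (i - 1)) (Lpow n (i - 1)) (tprod (2 * n) (D2 n) (Lpow n (m - i - 1))))
           in {f \<in> Lpow n m. \<forall>h\<in>S. cinner (n * m) f h = 0}))"

fun dseq :: "nat \<Rightarrow> nat \<Rightarrow> int" where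
  "dseq n 0 = 1"
| "dseq n (Suc 0) = int n + 1"
| "dseq n (Suc (Suc m)) = (int n + 1) * dseq n (Suc m) - dseq n m"

end

theory Submission
  imports Defs "HOL-Library.Sublist"
begin

(* Write e(a), for a \<le> n, for the symmetric tensor of weight a, so that L^m has the basis
   e(w) = e(w!0) \<otimes> ... \<otimes> e(w!(m-1)) indexed by the words w over {0..n} of length m.
   Torus weights and one rotation show that D\<^sub>2 is spanned by a single invariant vector \<omega>, so
   E(m) is the orthogonal complement in L^m of the vectors e(u) \<otimes> \<omega> \<otimes> e(v).

   Replacing a factor [0, n] of a word w by \<omega> gives such a vector, and these vectors are
   triangular with respect to the basis (ordered by the value of w in base n + 1), hence
   independent: dim E(m) is at most the number a(m) of words avoiding the factor [0, n].
   Conversely, a vector of E(m + 1) \<otimes> L orthogonal to E(m) \<otimes> \<omega> already lies in E(m + 2),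
   so dim E(m + 2) \<ge> (n + 1) dim E(m + 1) - dim E(m). Since a(0) = 1, a(1) = n + 1 and
   a(m + 2) = (n + 1) a(m + 1) - a(m), induction gives dim E(m) = a(m) = d(m). *)

section \<open>Elementary tensors and the inner product\<close>

interpretation V: vector_space cscale
  by unfold_locales (auto simp: cscale_def fun_eq_iff algebra_simps)

lemma cscale_apply: "cscale c f x = c * f x"
  by (simp add: cscale_def)

lemma sum_fun_apply: "(\<Sum>i\<in>I. f i) x = (\<Sum>i\<in>I. f i x)"
  by (induction I rule: infinite_finite_induct) auto

lemma prod_lessThan_add: "(\<Prod>k<n + m. G k) = (\<Prod>k<n. G k) * (\<Prod>k<m. G (n + k))"
  for G :: "nat \<Rightarrow> 'a::comm_monoid_mult"
  by (induction m) (simp_all add: ac_simps)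

abbreviation clinear :: "((bool list \<Rightarrow> complex) \<Rightarrow> bool list \<Rightarrow> complex) \<Rightarrow> bool" where
  "clinear \<equiv> Vector_Spaces.linear cscale cscale"

lemma clinearI:
  "(\<And>x y. f (x + y) = f x + f y) \<Longrightarrow> (\<And>c x. f (cscale c x) = cscale c (f x)) \<Longrightarrow> clinear f"
  using V.vector_space_axioms by (simp add: Vector_Spaces.linear_iff)

lemma linear_image_span_subspace:
  assumes "clinear f" "x \<in> V.span S" "\<And>s. s \<in> S \<Longrightarrow> f s \<in> T" "V.subspace T"
  shows "f x \<in> T"
proof -
  have "f x \<in> f ` V.span S" using assms(2) by blast
  also have "\<dots> = V.span (f ` S)"
    using module_hom.span_image[of cscale cscale f S] assms(1) by (simp add: module_hom_iff_linear)
  also have "\<dots> \<subseteq> T" using assms(3,4) by (intro V.span_minimal) auto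
  finally show ?thesis .
qed

definition blists :: "nat \<Rightarrow> bool list set" where
  "blists N = {xs. length xs = N}"

lemma finite_blists [simp]: "finite (blists N)"
  using finite_lists_length_eq[of "UNIV :: bool set" N] by (simp add: blists_def)

lemma blists_add: "blists (N + M) = (\<lambda>(u, v). u @ v) ` (blists N \<times> blists M)"
proof
  show "blists (N + M) \<subseteq> (\<lambda>(u, v). u @ v) ` (blists N \<times> blists M)"
  proof
    fix xs assume "xs \<in> blists (N + M)"
    then have "xs = (\<lambda>(u, v). u @ v) (take N xs, drop N xs)"
      "(take N xs, drop N xs) \<in> blists N \<times> blists M"
      by (auto simp: blists_def)
    then show "xs \<in> (\<lambda>(u, v). u @ v) ` (blists N \<times> blists M)" by blast
  qed
qed (auto simp: blists_def)

lemma sum_blists_add: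
  "(\<Sum>xs\<in>blists (N + M). F xs) = (\<Sum>u\<in>blists N. \<Sum>v\<in>blists M. F (u @ v))"
proof -
  have "inj_on (\<lambda>(u, v). u @ v) (blists N \<times> blists M)"
    by (auto simp: inj_on_def blists_def)
  then have "(\<Sum>xs\<in>blists (N + M). F xs) = (\<Sum>p\<in>blists N \<times> blists M. F ((\<lambda>(u, v). u @ v) p))"
    unfolding blists_add by (rule sum.reindex[unfolded comp_def])
  then show ?thesis
    by (simp add: sum.cartesian_product case_prod_beta)
qed

lemma sum_blists_Suc:
  "(\<Sum>ys\<in>blists (Suc N). G ys) = (\<Sum>ys\<in>blists N. G (False # ys)) + (\<Sum>ys\<in>blists N. G (True # ys))"
proof -
  have "blists (Suc N) = Cons False ` blists N \<union> Cons True ` blists N"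
    by (auto simp: blists_def length_Suc_conv)
  then have "(\<Sum>ys\<in>blists (Suc N). G ys) =
      (\<Sum>ys\<in>Cons False ` blists N. G ys) + (\<Sum>ys\<in>Cons True ` blists N. G ys)"
    by (metis (no_types, lifting) finite_blists finite_imageI disjoint_iff imageE list.inject sum.union_disjoint)
  then show ?thesis by (simp add: sum.reindex)
qed

lemma sum_prod_blists:
  "(\<Sum>ys\<in>blists N. \<Prod>k<N. F k (ys ! k)) = (\<Prod>k<N. F k False + F k True)"
  for F :: "nat \<Rightarrow> bool \<Rightarrow> 'a::comm_semiring_1"
proof (induction N arbitrary: F)
  case 0
  then show ?case by (simp add: blists_def)
next
  case (Suc N)
  have "(\<Sum>ys\<in>blists (Suc N). \<Prod>k<Suc N. F k (ys ! k)) =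
     (F 0 False + F 0 True) * (\<Sum>ys\<in>blists N. \<Prod>k<N. F (Suc k) (ys ! k))"
    unfolding sum_blists_Suc
    by (simp del: prod.lessThan_Suc add: prod.lessThan_Suc_shift sum_distrib_left sum.distrib algebra_simps)
  then show ?case
    using Suc.IH[of "\<lambda>k. F (Suc k)"] by (simp del: prod.lessThan_Suc add: prod.lessThan_Suc_shift)
qed

lemma sum_prod_blists2:
  "(\<Sum>u\<in>blists N. \<Sum>v\<in>blists N. \<Prod>k<N. F k (u ! k) (v ! k)) =
   (\<Prod>k<N. F k False False + F k False True + F k True False + F k True True)"
  for F :: "nat \<Rightarrow> bool \<Rightarrow> bool \<Rightarrow> 'a::comm_semiring_1"
  by (simp add: sum_prod_blists[where F = "\<lambda>k y. F k (_ ! k) y"]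
      sum_prod_blists[where F = "\<lambda>k x. F k x False + F k x True"] add.assoc)

definition tensor :: "nat \<Rightarrow> (bool list \<Rightarrow> complex) \<Rightarrow> (bool list \<Rightarrow> complex) \<Rightarrow> bool list \<Rightarrow> complex" where
  "tensor N a b = (\<lambda>xs. a (take N xs) * b (drop N xs))"

lemma tensor_append: "length u = N \<Longrightarrow> tensor N a b (u @ v) = a u * b v"
  by (simp add: tensor_def)

lemma tprod_eq_span_tensor: "tprod N A B = V.span {tensor N a b | a b. a \<in> A \<and> b \<in> B}"
  by (simp add: tprod_def tensor_def)

lemma linear_tensor_left: "clinear (\<lambda>a. tensor N a b)"
  by (rule clinearI) (simp_all add: tensor_def fun_eq_iff algebra_simps cscale_apply)

lemma linear_tensor_right: "clinear (\<lambda>b. tensor N a b)"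
  by (rule clinearI) (simp_all add: tensor_def fun_eq_iff algebra_simps cscale_apply)

lemma tensor_assoc: "tensor N a (tensor M b c) = tensor (N + M) (tensor N a b) c"
  by (simp add: tensor_def fun_eq_iff drop_take mult.assoc add.commute)

lemma tensor_unitv_left [simp]: "tensor 0 unitv b = b"
  by (simp add: tensor_def unitv_def)

lemma tensor_unitv_right: "a \<in> tens N \<Longrightarrow> tensor N a unitv = a"
  by (auto simp: tensor_def unitv_def tens_def fun_eq_iff)

lemma unitv_tens: "unitv \<in> tens 0"
  by (simp add: unitv_def tens_def)

lemma tensor_tens:
  assumes "a \<in> tens N" "b \<in> tens M"
  shows "tensor N a b \<in> tens (N + M)"
proof -
  have "a (take N xs) * b (drop N xs) = 0" if "length xs \<noteq> N + M" for xs :: "bool list"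
    using assms that by (cases "length xs < N") (auto simp: tens_def)
  then show ?thesis by (auto simp: tens_def tensor_def)
qed

lemma subspace_tens: "V.subspace (tens N)"
  by (auto simp: V.subspace_def tens_def cscale_apply)

lemma span_subset_tens: "S \<subseteq> tens N \<Longrightarrow> V.span S \<subseteq> tens N"
  using V.span_minimal subspace_tens by blast

lemma tprod_span_span:
  "tprod N (V.span A) (V.span B) = V.span {tensor N a b | a b. a \<in> A \<and> b \<in> B}"
  (is "_ = V.span ?G")
proof -
  have gen: "tensor N a b \<in> V.span ?G" if "a \<in> V.span A" "b \<in> V.span B" for a b
  proof -
    have "tensor N a' b \<in> V.span ?G" if "a' \<in> A" for a'
      by (rule linear_image_span_subspace[OF linear_tensor_right \<open>b \<in> V.span B\<close> _ V.subspace_span])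
        (use that in \<open>auto intro: V.span_base\<close>)
    then show ?thesis
      by (rule linear_image_span_subspace[OF linear_tensor_left \<open>a \<in> V.span A\<close> _ V.subspace_span])
  qed
  show ?thesis
    unfolding tprod_eq_span_tensor
  proof
    show "V.span {tensor N a b |a b. a \<in> V.span A \<and> b \<in> V.span B} \<subseteq> V.span ?G"
      using gen by (intro V.span_minimal) auto
    show "V.span ?G \<subseteq> V.span {tensor N a b |a b. a \<in> V.span A \<and> b \<in> V.span B}"
      by (intro V.span_mono) (auto intro: V.span_base)
  qed
qed

lemma cinner_add_left: "cinner N (f + g) h = cinner N f h + cinner N g h"
  by (simp add: cinner_def sum.distrib algebra_simps)

lemma cinner_add_right: "cinner N f (g + h) = cinner N f g + cinner N f h"
  by (simp add: cinner_def sum.distrib algebra_simps)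

lemma cinner_diff_left: "cinner N (f - g) h = cinner N f h - cinner N g h"
  by (simp add: cinner_def sum_subtractf algebra_simps)

lemma cinner_scale_left: "cinner N (cscale c f) h = c * cinner N f h"
  by (simp add: cinner_def sum_distrib_left algebra_simps cscale_apply)

lemma cinner_scale_right: "cinner N f (cscale c h) = cnj c * cinner N f h"
  by (simp add: cinner_def sum_distrib_left algebra_simps cscale_apply)

lemma cinner_zero_left [simp]: "cinner N 0 h = 0"
  by (simp add: cinner_def)

lemma cinner_zero_right [simp]: "cinner N f 0 = 0"
  by (simp add: cinner_def)

lemma subspace_cinner_left_eq_0: "V.subspace {f. cinner N f h = 0}"
  by (auto simp: V.subspace_def cinner_add_left cinner_scale_left)

lemma subspace_cinner_right_eq_0: "V.subspace {h. cinner N f h = 0}"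
  by (auto simp: V.subspace_def cinner_add_right cinner_scale_right)

lemma cinner_span_right_eq_0:
  assumes "\<And>g. g \<in> G \<Longrightarrow> cinner N f g = 0" "h \<in> V.span G"
  shows "cinner N f h = 0"
  using V.span_induct[OF assms(2) subspace_cinner_right_eq_0] assms(1) by blast

lemma cinner_span_left_eq_0:
  assumes "\<And>g. g \<in> G \<Longrightarrow> cinner N g h = 0" "f \<in> V.span G"
  shows "cinner N f h = 0"
  using V.span_induct[OF assms(2) subspace_cinner_left_eq_0] assms(1) by blast

lemma cinner_blists: "cinner N f h = (\<Sum>xs\<in>blists N. f xs * cnj (h xs))"
  by (simp add: cinner_def blists_def)

lemma cinner_tensor: "cinner (N + M) (tensor N a b) (tensor N c d) = cinner N a c * cinner M b d"
proof -
  have "cinner (N + M) (tensor N a b) (tensor N c d) =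
      (\<Sum>u\<in>blists N. \<Sum>v\<in>blists M. (a u * cnj (c u)) * (b v * cnj (d v)))"
    unfolding cinner_blists sum_blists_add
    by (intro sum.cong refl) (simp add: tensor_append blists_def algebra_simps)
  then show ?thesis
    by (simp add: cinner_blists sum_product)
qed

lemma cinner_self_eq_0:
  assumes "f \<in> tens N" "cinner N f f = 0"
  shows "f = 0"
proof -
  have "cinner N f f = of_real (\<Sum>xs\<in>blists N. (cmod (f xs))\<^sup>2)"
    unfolding cinner_blists of_real_sum by (intro sum.cong refl) (metis complex_norm_square)
  then have "(\<Sum>xs\<in>blists N. (cmod (f xs))\<^sup>2) = 0"
    using assms(2) by (metis of_real_eq_0_iff)
  then have "\<forall>xs\<in>blists N. f xs = 0"
    by (subst (asm) sum_nonneg_eq_0_iff) auto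
  then show ?thesis
    using assms(1) by (auto simp: blists_def tens_def fun_eq_iff)
qed

section \<open>Symmetric tensors and the word basis\<close>

definition ones :: "bool list \<Rightarrow> nat" where
  "ones xs = length (filter id xs)"

lemma ones_simps [simp]:
  "ones [] = 0" "ones (True # xs) = Suc (ones xs)" "ones (False # xs) = ones xs"
  "ones (xs @ ys) = ones xs + ones ys" "ones (replicate k True) = k" "ones (replicate k False) = 0"
  by (simp_all add: ones_def)

lemma ones_le_length: "ones xs \<le> length xs"
  by (simp add: ones_def)

lemma ones_eq_length_imp_replicate:
  assumes "ones v = length v"
  shows "v = replicate (length v) True"
proof (rule replicate_eqI)
  show "y = True" if "y \<in> set v" for y
    using that assms length_filter_less[of y v id] by (auto simp: ones_def)
qed simp

lemma ones_eq_count_mset: "ones xs = count (mset xs) True"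
  by (induction xs) auto

lemma ones_permute_list: "\<sigma> permutes {..<length xs} \<Longrightarrow> ones (permute_list \<sigma> xs) = ones xs"
  by (simp add: ones_eq_count_mset)

lemma mset_eq_if_ones_eq:
  assumes "length x = length y" "ones x = ones y"
  shows "mset x = mset y"
proof (rule multiset_eqI)
  have "count (mset xs) False = length xs - ones xs" for xs
    by (induction xs) (auto simp: Suc_diff_le ones_le_length)
  fix b
  show "count (mset x) b = count (mset y) b"
    using assms \<open>count (mset _) False = _\<close> by (cases b) (simp_all add: ones_eq_count_mset)
qed

lemma Lsym_iff_ones:
  "f \<in> Lsym n \<longleftrightarrow> f \<in> tens n \<and>
     (\<forall>x y. length x = n \<longrightarrow> length y = n \<longrightarrow> ones x = ones y \<longrightarrow> f x = f y)"
proof -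
  have perm: "map (\<lambda>k. xs ! \<sigma> k) [0..<n] = permute_list \<sigma> xs" if "length xs = n"
    for xs :: "bool list" and \<sigma>
    using that by (simp add: permute_list_def)
  have "(\<forall>\<sigma> xs. \<sigma> permutes {..<n} \<longrightarrow> length xs = n \<longrightarrow> f (permute_list \<sigma> xs) = f xs) \<longleftrightarrow>
     (\<forall>x y. length x = n \<longrightarrow> length y = n \<longrightarrow> ones x = ones y \<longrightarrow> f x = f y)"
  proof (intro iffI allI impI)
    fix x y :: "bool list"
    assume inv: "\<forall>\<sigma> xs. \<sigma> permutes {..<n} \<longrightarrow> length xs = n \<longrightarrow> f (permute_list \<sigma> xs) = f xs"
      and xy: "length x = n" "length y = n" "ones x = ones y"
    from xy have "mset x = mset y" by (intro mset_eq_if_ones_eq) simp_all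
    then obtain p where "p permutes {..<length y}" "permute_list p y = x"
      by (rule mset_eq_permutation)
    with inv xy(2) show "f x = f y" by auto
  next
    fix \<sigma> and xs :: "bool list"
    assume sym: "\<forall>x y. length x = n \<longrightarrow> length y = n \<longrightarrow> ones x = ones y \<longrightarrow> f x = f y"
      and "\<sigma> permutes {..<n}" "length xs = n"
    then show "f (permute_list \<sigma> xs) = f xs"
      by (intro sym[rule_format]) (simp_all add: ones_permute_list)
  qed
  then show ?thesis
    unfolding Lsym_def by (auto simp: perm)
qed

lemma LsymI:
  "f \<in> tens n \<Longrightarrow> (\<And>x y. length x = n \<Longrightarrow> length y = n \<Longrightarrow> ones x = ones y \<Longrightarrow> f x = f y)
    \<Longrightarrow> f \<in> Lsym n"
  unfolding Lsym_iff_ones by blast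

lemma LsymD:
  "f \<in> Lsym n \<Longrightarrow> f \<in> tens n"
  "f \<in> Lsym n \<Longrightarrow> length x = n \<Longrightarrow> length y = n \<Longrightarrow> ones x = ones y \<Longrightarrow> f x = f y"
  unfolding Lsym_iff_ones by blast+

lemma subspace_Lsym: "V.subspace (Lsym n)"
  unfolding V.subspace_def
proof (intro conjI ballI allI)
  show "0 \<in> Lsym n"
    by (rule LsymI) (simp_all add: tens_def)
  fix x y assume x: "x \<in> Lsym n" and y: "y \<in> Lsym n"
  show "x + y \<in> Lsym n"
  proof (rule LsymI)
    show "x + y \<in> tens n" using LsymD(1)[OF x] LsymD(1)[OF y] by (simp add: tens_def)
    fix a b :: "bool list" assume "length a = n" "length b = n" "ones a = ones b"
    then show "(x + y) a = (x + y) b" using LsymD(2)[OF x, of a b] LsymD(2)[OF y, of a b] by simp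
  qed
next
  fix c x assume x: "x \<in> Lsym n"
  show "cscale c x \<in> Lsym n"
  proof (rule LsymI)
    show "cscale c x \<in> tens n" using LsymD(1)[OF x] by (simp add: tens_def cscale_apply)
    fix a b :: "bool list" assume "length a = n" "length b = n" "ones a = ones b"
    then show "cscale c x a = cscale c x b" using LsymD(2)[OF x, of a b] by (simp add: cscale_apply)
  qed
qed

definition sym_basis :: "nat \<Rightarrow> nat \<Rightarrow> bool list \<Rightarrow> complex" where
  "sym_basis n a = (\<lambda>xs. if length xs = n \<and> ones xs = a then 1 else 0)"

definition sym_rep :: "nat \<Rightarrow> nat \<Rightarrow> bool list" where
  "sym_rep n a = replicate a True @ replicate (n - a) False"

lemma length_sym_rep [simp]: "a \<le> n \<Longrightarrow> length (sym_rep n a) = n"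
  by (simp add: sym_rep_def)

lemma ones_sym_rep [simp]: "ones (sym_rep n a) = a"
  by (simp add: sym_rep_def)

lemma sym_basis_sym_rep: "b \<le> n \<Longrightarrow> sym_basis n a (sym_rep n b) = (if a = b then 1 else 0)"
  by (simp add: sym_basis_def)

lemma sym_basis_tens: "sym_basis n a \<in> tens n"
  by (simp add: tens_def sym_basis_def)

lemma sym_basis_Lsym: "sym_basis n a \<in> Lsym n"
  by (rule LsymI[OF sym_basis_tens]) (simp add: sym_basis_def)

lemma Lsym_eq_span_sym_basis: "Lsym n = V.span (sym_basis n ` {..n})"
proof
  show "V.span (sym_basis n ` {..n}) \<subseteq> Lsym n"
    using sym_basis_Lsym subspace_Lsym by (intro V.span_minimal) auto
  show "Lsym n \<subseteq> V.span (sym_basis n ` {..n})"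
  proof
    fix f assume f: "f \<in> Lsym n"
    have "f = (\<Sum>a\<le>n. cscale (f (sym_rep n a)) (sym_basis n a))"
    proof
      fix xs :: "bool list"
      show "f xs = (\<Sum>a\<le>n. cscale (f (sym_rep n a)) (sym_basis n a)) xs"
      proof (cases "length xs = n")
        case True
        then have "ones xs \<le> n" using ones_le_length by metis
        have "(\<Sum>a\<le>n. cscale (f (sym_rep n a)) (sym_basis n a)) xs =
            (\<Sum>a\<le>n. if a = ones xs then f (sym_rep n a) else 0)"
          unfolding sum_fun_apply by (intro sum.cong refl) (auto simp: sym_basis_def True cscale_apply)
        also have "\<dots> = f xs"
          using \<open>ones xs \<le> n\<close> LsymD(2)[OF f, of "sym_rep n (ones xs)" xs] True by simp
        finally show ?thesis by simp
      next
        case False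
        then show ?thesis
          using LsymD(1)[OF f] by (simp add: sum_fun_apply sym_basis_def tens_def cscale_apply)
      qed
    qed
    also have "\<dots> \<in> V.span (sym_basis n ` {..n})"
      by (intro V.span_sum V.span_scale V.span_base) auto
    finally show "f \<in> V.span (sym_basis n ` {..n})" .
  qed
qed

fun word_tensor :: "nat \<Rightarrow> nat list \<Rightarrow> bool list \<Rightarrow> complex" where
  "word_tensor n [] = unitv"
| "word_tensor n (a # w) = tensor n (sym_basis n a) (word_tensor n w)"

definition words :: "nat \<Rightarrow> nat \<Rightarrow> nat list set" where
  "words n m = {w. set w \<subseteq> {..n} \<and> length w = m}"

lemma finite_words [simp]: "finite (words n m)"
  unfolding words_def by (rule finite_lists_length_eq) simp

lemma card_words: "card (words n m) = (n + 1) ^ m"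
  unfolding words_def by (subst card_lists_length_eq) auto

lemma words_0 [simp]: "words n 0 = {[]}"
  by (auto simp: words_def)

lemma words_Suc: "words n (Suc m) = {a # w | a w. a \<le> n \<and> w \<in> words n m}"
  by (auto simp: words_def length_Suc_conv)

lemma word_tensor_tens: "word_tensor n w \<in> tens (n * length w)"
  by (induction w) (simp_all add: unitv_tens tensor_tens[OF sym_basis_tens])

lemma word_tensor_append:
  "word_tensor n (u @ v) = tensor (n * length u) (word_tensor n u) (word_tensor n v)"
  by (induction u) (simp_all add: tensor_assoc)

lemma word_tensor_singleton: "word_tensor n [a] = sym_basis n a"
  by (simp add: tensor_unitv_right[OF sym_basis_tens])

lemma Lpow_eq_span_word_tensor: "Lpow n m = V.span (word_tensor n ` words n m)"
proof (induction m)
  case 0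
  then show ?case by simp
next
  case (Suc m)
  have "{tensor n a b |a b. a \<in> sym_basis n ` {..n} \<and> b \<in> word_tensor n ` words n m} =
      word_tensor n ` words n (Suc m)" (is "?L = ?R")
  proof
    show "?L \<subseteq> ?R"
    proof
      fix x assume "x \<in> ?L"
      then obtain a w where "a \<le> n" "w \<in> words n m" "x = word_tensor n (a # w)" by auto
      then show "x \<in> ?R" unfolding words_Suc by blast
    qed
    show "?R \<subseteq> ?L" unfolding words_Suc by fastforce
  qed
  then show ?case
    using Suc tprod_span_span[of n "sym_basis n ` {..n}" "word_tensor n ` words n m"]
    by (simp add: Lsym_eq_span_sym_basis)
qed

definition word_rep :: "nat \<Rightarrow> nat list \<Rightarrow> bool list" where
  "word_rep n w = concat (map (sym_rep n) w)"

lemma word_rep_simps [simp]: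
  "word_rep n [] = []" "word_rep n (a # w) = sym_rep n a @ word_rep n w"
  "word_rep n (u @ v) = word_rep n u @ word_rep n v"
  by (simp_all add: word_rep_def)

lemma length_word_rep: "set w \<subseteq> {..n} \<Longrightarrow> length (word_rep n w) = n * length w"
  by (induction w) auto

lemma word_tensor_word_rep:
  "set w' \<subseteq> {..n} \<Longrightarrow> length w = length w' \<Longrightarrow>
    word_tensor n w (word_rep n w') = (if w = w' then 1 else 0)"
proof (induction w arbitrary: w')
  case Nil
  then show ?case by (simp add: unitv_def)
next
  case (Cons a w)
  then obtain b w'' where w': "w' = b # w''" by (cases w') auto
  then have "word_tensor n (a # w) (word_rep n w') =
      sym_basis n a (sym_rep n b) * word_tensor n w (word_rep n w'')"
    using Cons.prems by (simp add: tensor_append)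
  then show ?case
    using Cons.IH[of w''] Cons.prems w' by (simp add: sym_basis_sym_rep)
qed

lemma independent_family_if_scalars_zero:
  fixes v :: "'i \<Rightarrow> bool list \<Rightarrow> complex"
  assumes "finite I" and zero: "\<And>c. (\<Sum>i\<in>I. cscale (c i) (v i)) = 0 \<Longrightarrow> \<forall>i\<in>I. c i = 0"
  shows "V.independent (v ` I) \<and> inj_on v I"
proof
  show inj: "inj_on v I"
  proof (rule inj_onI, rule ccontr)
    fix i j assume ij: "i \<in> I" "j \<in> I" "v i = v j" "i \<noteq> j"
    define c :: "'i \<Rightarrow> complex" where "c k = (if k = i then 1 else if k = j then -1 else 0)" for k
    have "(\<Sum>k\<in>I. cscale (c k) (v k)) = (\<Sum>k\<in>{i, j}. cscale (c k) (v k))"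
      using assms(1) ij by (intro sum.mono_neutral_right) (auto simp: c_def cscale_def fun_eq_iff)
    also have "\<dots> = 0"
      using ij by (simp add: c_def cscale_def fun_eq_iff)
    finally have "\<forall>k\<in>I. c k = 0"
      by (rule zero)
    then show False
      using ij(1) by (auto simp: c_def)
  qed
  show "V.independent (v ` I)"
  proof (rule V.independent_if_scalars_zero)
    fix f x assume "(\<Sum>x\<in>v ` I. cscale (f x) x) = 0" "x \<in> v ` I"
    then show "f x = 0"
      using zero[of "f \<circ> v"] by (auto simp: sum.reindex[OF inj])
  qed (use assms in simp)
qed

lemma independent_sum_eq_0:
  assumes "V.independent S" "finite S" "(\<Sum>v\<in>S. cscale (u v) v) = 0" "v \<in> S"
  shows "u v = 0"
  using assms V.dependent_finite by blast

lemma independent_if_triangular: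
  fixes v :: "'i \<Rightarrow> bool list \<Rightarrow> complex" and p :: "'i \<Rightarrow> bool list" and key :: "'i \<Rightarrow> nat"
  assumes fin: "finite I" and diag: "\<And>i. i \<in> I \<Longrightarrow> v i (p i) \<noteq> 0"
    and tri: "\<And>i j. i \<in> I \<Longrightarrow> j \<in> I \<Longrightarrow> i \<noteq> j \<Longrightarrow> v j (p i) \<noteq> 0 \<Longrightarrow> key j < key i"
  shows "V.independent (v ` I) \<and> inj_on v I"
proof (rule independent_family_if_scalars_zero[OF fin])
  fix c assume comb: "(\<Sum>i\<in>I. cscale (c i) (v i)) = 0"
  show "\<forall>i\<in>I. c i = 0"
  proof (rule ccontr)
    define J where "J = {i\<in>I. c i \<noteq> 0}"
    assume "\<not> (\<forall>i\<in>I. c i = 0)"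
    then have "finite J" "J \<noteq> {}" using fin by (auto simp: J_def)
    then have "Min (key ` J) \<in> key ` J" by (intro Min_in) auto
    then obtain i0 where i0: "i0 \<in> J" "key i0 = Min (key ` J)" by auto
    have off: "c i * v i (p i0) = 0" if "i \<in> I - {i0}" for i
    proof (cases "c i = 0")
      case False
      then have "key i0 \<le> key i" using that \<open>finite J\<close> i0 by (simp add: J_def)
      then have "v i (p i0) = 0" using tri[of i0 i] that i0 by (force simp: J_def)
      then show ?thesis by simp
    qed simp
    have "0 = c i0 * v i0 (p i0) + (\<Sum>i\<in>I - {i0}. c i * v i (p i0))"
      using fun_cong[OF comb, of "p i0"] i0 fin
      by (simp add: sum_fun_apply cscale_apply sum.remove[of I i0] J_def)
    also have "(\<Sum>i\<in>I - {i0}. c i * v i (p i0)) = 0"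
      by (intro sum.neutral ballI off)
    finally show False using i0 diag by (auto simp: J_def)
  qed
qed

lemma independent_word_tensor:
  "V.independent (word_tensor n ` words n m) \<and> inj_on (word_tensor n) (words n m)"
proof (rule independent_if_triangular[where p = "word_rep n" and key = "\<lambda>_. 0"])
  show "finite (words n m)" by simp
qed (auto simp: word_tensor_word_rep words_def)

lemma dim_Lpow: "V.dim (Lpow n m) = (n + 1) ^ m"
  using independent_word_tensor[of n m]
  by (simp add: Lpow_eq_span_word_tensor V.dim_eq_card_independent card_image card_words)

section \<open>The action of \<open>SU(2)\<close>\<close>

lemma tact_blists: "tact g f xs = (\<Sum>ys\<in>blists (length xs). (\<Prod>k<length xs. g (xs ! k) (ys ! k)) * f ys)"
  by (simp add: tact_def blists_def)

lemma tact_add: "tact g (f + h) = tact g f + tact g h"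
  by (simp add: tact_def fun_eq_iff sum.distrib algebra_simps)

lemma tact_scale: "tact g (cscale c f) = cscale c (tact g f)"
  by (simp add: tact_def fun_eq_iff sum_distrib_left algebra_simps cscale_apply)

lemma tact_zero [simp]: "tact g 0 = 0"
  by (simp add: tact_def fun_eq_iff)

lemma tact_sum: "finite I \<Longrightarrow> tact g (\<lambda>xs. \<Sum>i\<in>I. F i xs) xs = (\<Sum>i\<in>I. tact g (F i) xs)"
  unfolding tact_blists by (simp add: sum_distrib_left) (rule sum.swap)

lemma tact_eq_0_if_length:
  assumes "\<And>y. length y = length x \<Longrightarrow> f y = 0"
  shows "tact g f x = 0"
  using assms by (simp add: tact_blists blists_def)

definition mat2_mult :: "(bool \<Rightarrow> bool \<Rightarrow> complex) \<Rightarrow> (bool \<Rightarrow> bool \<Rightarrow> complex) \<Rightarrow> bool \<Rightarrow> bool \<Rightarrow> complex" where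
  "mat2_mult A B = (\<lambda>i j. A i False * B False j + A i True * B True j)"

lemma tact_tact: "tact A (tact B h) = tact (mat2_mult A B) h"
proof
  fix xs :: "bool list"
  define N where "N = length xs"
  have "tact A (tact B h) xs = (\<Sum>ys\<in>blists N. \<Sum>zs\<in>blists N.
      (\<Prod>k<N. A (xs ! k) (ys ! k)) * ((\<Prod>k<N. B (ys ! k) (zs ! k)) * h zs))"
    unfolding tact_blists N_def by (intro sum.cong refl) (simp add: blists_def sum_distrib_left)
  also have "\<dots> = (\<Sum>zs\<in>blists N. \<Sum>ys\<in>blists N.
      (\<Prod>k<N. A (xs ! k) (ys ! k) * B (ys ! k) (zs ! k)) * h zs)"
    by (subst sum.swap) (simp add: prod.distrib mult.assoc)
  also have "\<dots> = (\<Sum>zs\<in>blists N. (\<Prod>k<N. mat2_mult A B (xs ! k) (zs ! k)) * h zs)"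
    by (simp add: sum_distrib_right[symmetric] mat2_mult_def
        sum_prod_blists[where F = "\<lambda>k y. A (xs ! k) y * B y (_ ! k)"])
  finally show "tact A (tact B h) xs = tact (mat2_mult A B) h xs"
    unfolding tact_blists N_def .
qed

lemma tact_diag:
  assumes "\<And>i j. i \<noteq> j \<Longrightarrow> g i j = 0"
  shows "tact g f xs = (\<Prod>k<length xs. g (xs ! k) (xs ! k)) * f xs"
proof -
  have "(\<Prod>k<length xs. g (xs ! k) (ys ! k)) = 0" if "ys \<in> blists (length xs) - {xs}" for ys
  proof -
    have "length ys = length xs" "ys \<noteq> xs" using that by (auto simp: blists_def)
    then obtain k where "k < length xs" "xs ! k \<noteq> ys ! k" by (auto simp: list_eq_iff_nth_eq)
    moreover have "g (xs ! k) (ys ! k) = 0" using \<open>xs ! k \<noteq> ys ! k\<close> by (rule assms)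
    ultimately show ?thesis by (metis finite_lessThan lessThan_iff prod_zero)
  qed
  then have "(\<Sum>ys\<in>blists (length xs) - {xs}. (\<Prod>k<length xs. g (xs ! k) (ys ! k)) * f ys) = 0"
    by (intro sum.neutral) simp
  then show ?thesis
    unfolding tact_blists by (subst sum.remove[OF finite_blists, of xs]) (simp_all add: blists_def)
qed

lemma tact_id: "tact (\<lambda>i j. if i = j then 1 else 0) f = f"
  by (rule ext, subst tact_diag) simp_all

lemma tact_append:
  assumes "length u0 = N" "length v0 = M"
  shows "tact g f (u0 @ v0) = (\<Sum>u\<in>blists N. \<Sum>v\<in>blists M.
     ((\<Prod>k<N. g (u0 ! k) (u ! k)) * (\<Prod>k<M. g (v0 ! k) (v ! k))) * f (u @ v))"
proof -
  have "tact g f (u0 @ v0) =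
      (\<Sum>u\<in>blists N. \<Sum>v\<in>blists M. (\<Prod>k<N + M. g ((u0 @ v0) ! k) ((u @ v) ! k)) * f (u @ v))"
    unfolding tact_blists using assms by (simp add: sum_blists_add)
  also have "\<dots> = (\<Sum>u\<in>blists N. \<Sum>v\<in>blists M.
     ((\<Prod>k<N. g (u0 ! k) (u ! k)) * (\<Prod>k<M. g (v0 ! k) (v ! k))) * f (u @ v))"
    unfolding prod_lessThan_add using assms by (intro sum.cong refl) (simp add: blists_def nth_append)
  finally show ?thesis .
qed

lemma bij_betw_permute_list_blists:
  assumes "\<pi> permutes {..<N}"
  shows "bij_betw (permute_list \<pi>) (blists N) (blists N)"
proof (rule bij_betw_byWitness[where f' = "permute_list (inv \<pi>)"])
  have "inv \<pi> permutes {..<N}" using assms by (rule permutes_inv)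
  then show "\<forall>a\<in>blists N. permute_list (inv \<pi>) (permute_list \<pi> a) = a"
    "\<forall>a\<in>blists N. permute_list \<pi> (permute_list (inv \<pi>) a) = a"
    using assms by (auto simp: blists_def permute_list_compose[symmetric] permutes_inv_o)
qed (auto simp: blists_def)

lemma sum_blists_permute_list:
  assumes "\<pi> permutes {..<N}" "length x = N"
  shows "(\<Sum>y\<in>blists N. (\<Prod>k<N. g (x ! k) (y ! k)) * F (permute_list \<pi> y)) =
         (\<Sum>y\<in>blists N. (\<Prod>k<N. g (permute_list \<pi> x ! k) (y ! k)) * F y)"
proof -
  have "(\<Sum>y\<in>blists N. (\<Prod>k<N. g (permute_list \<pi> x ! k) (y ! k)) * F y) =
     (\<Sum>y\<in>blists N. (\<Prod>k<N. g (permute_list \<pi> x ! k) (permute_list \<pi> y ! k)) * F (permute_list \<pi> y))"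
    by (rule sum.reindex_bij_betw[OF bij_betw_permute_list_blists[OF assms(1)], symmetric])
  also have "\<dots> = (\<Sum>y\<in>blists N. (\<Prod>k<N. g (x ! \<pi> k) (y ! \<pi> k)) * F (permute_list \<pi> y))"
    using assms by (intro sum.cong refl) (simp add: permute_list_nth blists_def)
  also have "\<dots> = (\<Sum>y\<in>blists N. (\<Prod>k<N. g (x ! k) (y ! k)) * F (permute_list \<pi> y))"
    using prod.permute[OF assms(1), of "\<lambda>k. g (x ! k) (_ ! k)"] by (simp add: comp_def)
  finally show ?thesis by simp
qed

definition torus :: "real \<Rightarrow> bool \<Rightarrow> bool \<Rightarrow> complex" where
  "torus \<theta> = (\<lambda>i j. if i = j then (if i then cis (- \<theta>) else cis \<theta>) else 0)"

lemma sum_UNIV_bool: "(\<Sum>k\<in>UNIV. F k) = F False + F True" for F :: "bool \<Rightarrow> complex"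
  by (simp add: UNIV_bool)

lemma torus_SU2: "torus \<theta> \<in> SU2"
  by (auto simp: SU2_def torus_def sum_UNIV_bool cis_cnj cis_mult)

lemma prod_torus_diag:
  "(\<Prod>k<length xs. torus \<theta> (xs ! k) (xs ! k)) = cis (\<theta> * (real (length xs) - 2 * real (ones xs)))"
proof (induction xs)
  case (Cons a xs)
  then show ?case
    by (cases a) (simp_all del: prod.lessThan_Suc add: prod.lessThan_Suc_shift torus_def cis_mult algebra_simps)
qed simp

text \<open>The torus element of angle \<open>2\<pi>/(N + 1)\<close> acts on a basis vector of length \<open>N\<close> by a
  root of unity that is \<open>1\<close> only at weight zero.\<close>

lemma balanced_if_torus_invariant:
  assumes inv: "\<And>\<theta>. tact (torus \<theta>) f = f" and nz: "f xs \<noteq> 0"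
  shows "2 * ones xs = length xs"
proof -
  define N where "N = length xs"
  define D where "D = real N - 2 * real (ones xs)"
  define \<theta> where "\<theta> = 2 * pi / (real N + 1)"
  have "\<And>i j. i \<noteq> j \<Longrightarrow> torus \<theta> i j = 0" by (simp add: torus_def)
  then have "cis (\<theta> * D) * f xs = f xs"
    using tact_diag[of "torus \<theta>" f xs] inv by (simp add: prod_torus_diag D_def N_def)
  then have "cos (\<theta> * D) = 1"
    using nz by (metis cis.sel(1) mult_cancel_right2 one_complex.sel(1))
  then obtain k :: int where "\<theta> * D = k * 2 * pi"
    by (auto simp: cos_one_2pi_int)
  then have "(D - k * (real N + 1)) * (2 * pi) = 0"
    unfolding \<theta>_def by (simp add: field_simps)
  then have Dk: "D = k * (real N + 1)" by simp
  have "\<bar>D\<bar> \<le> real N"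
    unfolding D_def using ones_le_length[of xs] by (auto simp: N_def)
  have "k = 0"
  proof (rule ccontr)
    assume "k \<noteq> 0"
    then have "1 * (real N + 1) \<le> \<bar>real_of_int k\<bar> * (real N + 1)"
      by (intro mult_right_mono) linarith+
    then have "real N + 1 \<le> \<bar>D\<bar>" unfolding Dk abs_mult by simp
    then show False using \<open>\<bar>D\<bar> \<le> real N\<close> by linarith
  qed
  then have "D = 0" using Dk by simp
  then show ?thesis unfolding D_def N_def by linarith
qed

definition isqrt2 :: complex where
  "isqrt2 = complex_of_real (sqrt (1 / 2))"

lemma isqrt2_sq: "isqrt2 * isqrt2 = 1 / 2"
  by (simp add: isqrt2_def flip: of_real_mult)

definition rotation :: "bool \<Rightarrow> bool \<Rightarrow> complex" where
  "rotation = (\<lambda>i j. if i \<and> \<not> j then - isqrt2 else isqrt2)"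

lemma rotation_SU2: "rotation \<in> SU2"
  by (auto simp: SU2_def rotation_def sum_UNIV_bool isqrt2_def isqrt2_sq[unfolded isqrt2_def])

lemma tact_rotation_eq_0_iff: "tact rotation h = 0 \<longleftrightarrow> h = 0"
proof
  assume "tact rotation h = 0"
  have "mat2_mult (\<lambda>i j. rotation j i) rotation = (\<lambda>i j. if i = j then 1 else 0)"
    by (auto simp: mat2_mult_def rotation_def fun_eq_iff isqrt2_sq)
  then have "h = tact (\<lambda>i j. rotation j i) (tact rotation h)"
    by (simp add: tact_tact tact_id)
  then show "h = 0" using \<open>tact rotation h = 0\<close> by simp
qed simp

section \<open>The invariant vector \<open>\<omega>\<close> spanning \<open>D\<^sub>2\<close>\<close>

definition sympl :: "bool \<Rightarrow> bool \<Rightarrow> complex" where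
  "sympl a b = (if a = b then 0 else if a then -1 else 1)"

lemma SU2_sympl:
  assumes "g \<in> SU2"
  shows "g p False * g q False * sympl False False + g p False * g q True * sympl False True +
         g p True * g q False * sympl True False + g p True * g q True * sympl True True = sympl p q"
proof -
  have "g False False * g True True - g False True * g True False = 1"
    using assms by (simp add: SU2_def)
  then show ?thesis
    by (cases p; cases q) (simp_all add: sympl_def algebra_simps)
qed

definition pairing :: "nat \<Rightarrow> bool list \<Rightarrow> complex" where
  "pairing n x = (if length x = 2 * n then (\<Prod>j<n. sympl (x ! j) (x ! (n + j))) else 0)"

lemma pairing_append:
  "length u = n \<Longrightarrow> length v = n \<Longrightarrow> pairing n (u @ v) = (\<Prod>j<n. sympl (u ! j) (v ! j))"
  by (auto simp: pairing_def nth_append intro!: prod.cong)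

lemma pairing_permute_list:
  assumes "\<pi> permutes {..<n}" "length u = n" "length v = n"
  shows "pairing n (permute_list \<pi> u @ permute_list \<pi> v) = pairing n (u @ v)"
  using assms prod.permute[OF assms(1), of "\<lambda>j. sympl (u ! j) (v ! j)"]
  by (simp add: pairing_append permute_list_nth comp_def)

lemma tact_pairing:
  assumes "g \<in> SU2"
  shows "tact g (pairing n) = pairing n"
proof
  fix x :: "bool list"
  show "tact g (pairing n) x = pairing n x"
  proof (cases "length x = 2 * n")
    case False
    then show ?thesis by (subst tact_eq_0_if_length) (auto simp: pairing_def)
  next
    case True
    define u0 v0 where "u0 = take n x" and "v0 = drop n x"
    have x: "x = u0 @ v0" and l: "length u0 = n" "length v0 = n"
      using True by (auto simp: u0_def v0_def)
    have "tact g (pairing n) (u0 @ v0) = (\<Sum>u\<in>blists n. \<Sum>v\<in>blists n.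
        \<Prod>k<n. g (u0 ! k) (u ! k) * g (v0 ! k) (v ! k) * sympl (u ! k) (v ! k))"
      unfolding tact_append[OF l] by (intro sum.cong refl) (simp add: pairing_append blists_def prod.distrib)
    also have "\<dots> = pairing n (u0 @ v0)"
      using l by (subst sum_prod_blists2[where F = "\<lambda>k a b. g (u0 ! k) a * g (v0 ! k) b * sympl a b"])
        (simp add: SU2_sympl[OF assms] pairing_append)
    finally show ?thesis using x by simp
  qed
qed

definition omega :: "nat \<Rightarrow> bool list \<Rightarrow> complex" where
  "omega n x = (\<Sum>\<pi> | \<pi> permutes {..<n}. pairing n (take n x @ permute_list \<pi> (drop n x)))"

lemma tact_pairing_permute_right:
  assumes g: "g \<in> SU2" and \<pi>: "\<pi> permutes {..<n}"
  shows "tact g (\<lambda>y. pairing n (take n y @ permute_list \<pi> (drop n y))) x =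
    pairing n (take n x @ permute_list \<pi> (drop n x))"
proof (cases "length x = 2 * n")
  case False
  then show ?thesis by (subst tact_eq_0_if_length) (auto simp: pairing_def)
next
  case True
  define u0 v0 where "u0 = take n x" and "v0 = drop n x"
  have x: "x = u0 @ v0" and l: "length u0 = n" "length v0 = n"
    using True by (auto simp: u0_def v0_def)
  define P where "P a b = (\<Prod>k<n. g (a ! k) (b ! k))" for a b
  have "tact g (\<lambda>y. pairing n (take n y @ permute_list \<pi> (drop n y))) (u0 @ v0) =
      (\<Sum>u\<in>blists n. P u0 u * (\<Sum>v\<in>blists n. P v0 v * pairing n (u @ permute_list \<pi> v)))"
    unfolding tact_append[OF l] P_def
    by (intro sum.cong refl) (simp add: blists_def sum_distrib_left mult.assoc)
  also have "\<dots> = (\<Sum>u\<in>blists n. P u0 u * (\<Sum>v\<in>blists n. P (permute_list \<pi> v0) v * pairing n (u @ v)))"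
    unfolding P_def
    by (intro sum.cong refl arg_cong2[where f = "(*)"] sum_blists_permute_list[OF \<pi> l(2)])
  also have "\<dots> = tact g (pairing n) (u0 @ permute_list \<pi> v0)"
    unfolding tact_append[OF l(1) length_permute_list[of \<pi> v0, unfolded l(2)]] P_def
    by (simp add: sum_distrib_left mult.assoc)
  finally show ?thesis
    using x l by (simp add: tact_pairing[OF g])
qed

lemma tact_omega:
  assumes "g \<in> SU2"
  shows "tact g (omega n) = omega n"
proof
  fix x
  show "tact g (omega n) x = omega n x"
    unfolding omega_def[abs_def] tact_sum[OF finite_permutations[OF finite_lessThan]]
    by (intro sum.cong refl tact_pairing_permute_right[OF assms]) simp
qed

lemma omega_ones_right:
  assumes "length u = n" "length v = n" "length v' = n" "ones v = ones v'"
  shows "omega n (u @ v) = omega n (u @ v')"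
proof -
  obtain p where p: "p permutes {..<n}" "permute_list p v = v'"
    using mset_eq_if_ones_eq[of v' v] assms by (metis mset_eq_permutation)
  have "omega n (u @ v') = (\<Sum>\<pi> | \<pi> permutes {..<n}. pairing n (u @ permute_list (p \<circ> \<pi>) v))"
    unfolding omega_def using assms p
    by (intro sum.cong refl) (simp add: permute_list_compose)
  also have "\<dots> = (\<Sum>\<pi> | \<pi> permutes {..<n}. pairing n (u @ permute_list \<pi> v))"
    by (rule setum_permutations_compose_left[OF p(1), symmetric])
  also have "\<dots> = omega n (u @ v)"
    unfolding omega_def using assms by simp
  finally show ?thesis by simp
qed

lemma omega_ones_left:
  assumes "length u = n" "length u' = n" "ones u = ones u'" "length v = n"
  shows "omega n (u @ v) = omega n (u' @ v)"
proof -
  obtain p where p: "p permutes {..<n}" "permute_list p u = u'"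
    using mset_eq_if_ones_eq[of u' u] assms by (metis mset_eq_permutation)
  have p_inv: "\<pi> \<circ> inv p \<circ> p = \<pi>" for \<pi>
    using permutes_inv_o(2)[OF p(1)] by (simp add: comp_assoc)
  have "omega n (u' @ v) =
      (\<Sum>\<pi> | \<pi> permutes {..<n}. pairing n (permute_list p u @ permute_list p (permute_list (\<pi> \<circ> inv p) v)))"
    unfolding omega_def using assms p permutes_inv[OF p(1)]
    by (intro sum.cong refl) (simp add: permute_list_compose[symmetric] p_inv)
  also have "\<dots> = (\<Sum>\<pi> | \<pi> permutes {..<n}. pairing n (u @ permute_list (\<pi> \<circ> inv p) v))"
    using assms p(1) by (intro sum.cong refl) (simp add: pairing_permute_list)
  also have "\<dots> = (\<Sum>\<pi> | \<pi> permutes {..<n}. pairing n (u @ permute_list \<pi> v))"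
    by (rule sum_permutations_compose_right[OF permutes_inv[OF p(1)], symmetric])
  also have "\<dots> = omega n (u @ v)"
    unfolding omega_def using assms by simp
  finally show ?thesis by simp
qed

lemma omega_tens: "omega n \<in> tens (n + n)"
  unfolding tens_def omega_def by (auto simp: pairing_def intro!: sum.neutral)

lemma sum_sym_basis_tensor_apply:
  assumes "length u = n" "length v = n"
  shows "(\<Sum>a\<le>n. \<Sum>b\<le>n. cscale (F a b) (tensor n (sym_basis n a) (sym_basis n b))) (u @ v) =
    F (ones u) (ones v)"
proof -
  have "ones u \<le> n" "ones v \<le> n"
    using assms ones_le_length by metis+
  have "(\<Sum>a\<le>n. \<Sum>b\<le>n. cscale (F a b) (tensor n (sym_basis n a) (sym_basis n b))) (u @ v) =
      (\<Sum>a\<le>n. \<Sum>b\<le>n. if a = ones u \<and> b = ones v then F a b else 0)"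
    unfolding sum_fun_apply
    by (intro sum.cong refl) (simp add: cscale_apply tensor_append[OF assms(1)] sym_basis_def assms)
  also have "\<dots> = (\<Sum>a\<le>n. if a = ones u then F a (ones v) else 0)"
    using \<open>ones v \<le> n\<close> by (intro sum.cong refl) (simp add: sum.delta')
  also have "\<dots> = F (ones u) (ones v)"
    using \<open>ones u \<le> n\<close> by (simp add: sum.delta')
  finally show ?thesis .
qed

lemma tprod_Lsym_if_ones_invariant:
  assumes f: "f \<in> tens (n + n)"
    and left: "\<And>u u' v. length u = n \<Longrightarrow> length u' = n \<Longrightarrow> length v = n \<Longrightarrow> ones u = ones u' \<Longrightarrow>
      f (u @ v) = f (u' @ v)"
    and right: "\<And>u v v'. length u = n \<Longrightarrow> length v = n \<Longrightarrow> length v' = n \<Longrightarrow> ones v = ones v' \<Longrightarrow>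
      f (u @ v) = f (u @ v')"
  shows "f \<in> tprod n (Lsym n) (Lsym n)"
proof -
  define F where "F a b = f (sym_rep n a @ sym_rep n b)" for a b
  define g where "g = (\<Sum>a\<le>n. \<Sum>b\<le>n. cscale (F a b) (tensor n (sym_basis n a) (sym_basis n b)))"
  have "f = g"
  proof
    fix xs :: "bool list"
    show "f xs = g xs"
    proof (cases "length xs = n + n")
      case True
      define u v where "u = take n xs" and "v = drop n xs"
      have xs: "xs = u @ v" and l: "length u = n" "length v = n"
        using True by (auto simp: u_def v_def)
      have "ones u \<le> n" "ones v \<le> n" using l ones_le_length by metis+
      then show ?thesis
        using left[of "sym_rep n (ones u)" u "sym_rep n (ones v)"] right[of u "sym_rep n (ones v)" v] l
        by (simp add: xs g_def sum_sym_basis_tensor_apply F_def)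
    next
      case False
      have "tensor n (sym_basis n a) (sym_basis n b) \<in> tens (n + n)" for a b
        by (intro tensor_tens sym_basis_tens)
      then show ?thesis
        using f False unfolding g_def sum_fun_apply by (simp add: tens_def cscale_apply)
    qed
  qed
  also have "g \<in> tprod n (Lsym n) (Lsym n)"
    unfolding g_def tprod_eq_span_tensor
    by (intro V.span_sum V.span_scale V.span_base) (auto intro: sym_basis_Lsym)
  finally show ?thesis .
qed

lemma omega_D2: "omega n \<in> D2 n"
  unfolding D2_def
proof (intro CollectI conjI ballI)
  show "omega n \<in> tprod n (Lsym n) (Lsym n)"
    by (rule tprod_Lsym_if_ones_invariant[OF omega_tens]) (auto intro: omega_ones_left omega_ones_right)
qed (rule tact_omega)

definition pivot :: "nat \<Rightarrow> bool list" where
  "pivot n = replicate n False @ replicate n True"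

lemma omega_pivot: "omega n (pivot n) = fact n"
proof -
  have "pairing n (replicate n False @ permute_list \<pi> (replicate n True)) = 1"
    if "\<pi> permutes {..<n}" for \<pi>
  proof -
    have "permute_list \<pi> (replicate n True) = replicate n True"
      using that by (intro replicate_eqI) simp_all
    then show ?thesis by (simp add: pairing_append sympl_def)
  qed
  then show ?thesis
    by (simp add: omega_def pivot_def card_permutations)
qed

lemma omega_pivot_neq_0: "omega n (pivot n) \<noteq> 0"
  by (simp add: omega_pivot)

lemma subspace_D2: "V.subspace (D2 n)"
  unfolding V.subspace_def D2_def tprod_eq_span_tensor
  by (auto intro: V.span_zero V.span_add V.span_scale simp: tact_add tact_scale)

lemma D2_tens:
  assumes "f \<in> D2 n"
  shows "f \<in> tens (n + n)"
proof -
  have "{tensor n a b |a b. a \<in> Lsym n \<and> b \<in> Lsym n} \<subseteq> tens (n + n)"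
    by (auto intro: tensor_tens LsymD(1))
  then have "tprod n (Lsym n) (Lsym n) \<subseteq> tens (n + n)"
    unfolding tprod_eq_span_tensor by (rule span_subset_tens)
  then show ?thesis
    using assms by (auto simp: D2_def)
qed

lemma D2_balanced:
  assumes f: "f \<in> D2 n" and nz: "f x \<noteq> 0"
  shows "length x = n + n \<and> ones x = n"
proof -
  have "tact (torus \<theta>) f = f" for \<theta>
    using f torus_SU2 by (simp add: D2_def)
  then have "2 * ones x = length x"
    using nz by (rule balanced_if_torus_invariant)
  moreover have "length x = n + n"
    using D2_tens[OF f] nz by (auto simp: tens_def)
  ultimately show ?thesis by simp
qed

lemma tprod_Lsym_left_ones:
  assumes "f \<in> tprod n (Lsym n) B" "length u = n" "length u' = n" "ones u = ones u'"
  shows "f (u @ v) = f (u' @ v)"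
proof -
  have "V.subspace {f. f (u @ v) = f (u' @ v)}"
    unfolding V.subspace_def by (simp add: cscale_apply)
  moreover have "tensor n a b (u @ v) = tensor n a b (u' @ v)" if "a \<in> Lsym n" for a b
    using LsymD(2)[OF that assms(2-4)] assms(2,3) by (simp add: tensor_append)
  ultimately show ?thesis
    using V.span_induct[of f _ "\<lambda>f. f (u @ v) = f (u' @ v)"] assms(1)
    unfolding tprod_eq_span_tensor by blast
qed

text \<open>Since the first row of \<open>rotation\<close> is constant, evaluating \<open>rotation\<close>-translates at
  \<open>False\<^sup>n @ v\<close> only sees the partial sums over the first \<open>n\<close> factors.\<close>

lemma tact_rotation_replicate_False:
  "tact rotation f (replicate n False @ v) =
    isqrt2 ^ n * tact rotation (\<lambda>v. \<Sum>u\<in>blists n. f (u @ v)) v"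
proof -
  have "(\<Prod>k<n. rotation (replicate n False ! k) (u ! k)) = isqrt2 ^ n" for u
    by (simp add: rotation_def)
  then have "tact rotation f (replicate n False @ v) = (\<Sum>u\<in>blists n. \<Sum>v'\<in>blists (length v).
      isqrt2 ^ n * (\<Prod>k<length v. rotation (v ! k) (v' ! k)) * f (u @ v'))"
    by (simp add: tact_append)
  also have "\<dots> = isqrt2 ^ n * tact rotation (\<lambda>v. \<Sum>u\<in>blists n. f (u @ v)) v"
    unfolding tact_blists by (subst sum.swap) (simp add: sum_distrib_left mult.assoc)
  finally show ?thesis .
qed

lemma D2_partial_sum_eq_0:
  assumes f: "f \<in> D2 n" and pivot: "f (pivot n) = 0"
  shows "(\<Sum>u\<in>blists n. f (u @ v)) = 0"
proof -
  have "f (replicate n False @ v) = 0" for v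
  proof (rule ccontr)
    assume nz: "f (replicate n False @ v) \<noteq> 0"
    then have "length v = n" "ones v = n" using D2_balanced[OF f nz] by auto
    then have "replicate n False @ v = pivot n"
      using ones_eq_length_imp_replicate[of v] by (simp add: pivot_def)
    then show False using nz pivot by simp
  qed
  moreover have "tact rotation f = f"
    using f rotation_SU2 by (simp add: D2_def)
  ultimately have "isqrt2 ^ n * tact rotation (\<lambda>v. \<Sum>u\<in>blists n. f (u @ v)) v = 0" for v
    using tact_rotation_replicate_False[of f n v] by simp
  then have "tact rotation (\<lambda>v. \<Sum>u\<in>blists n. f (u @ v)) = 0"
    by (auto simp: isqrt2_def fun_eq_iff)
  then have "(\<lambda>v. \<Sum>u\<in>blists n. f (u @ v)) = 0"
    by (simp only: tact_rotation_eq_0_iff)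
  then show ?thesis
    by (metis zero_fun_apply)
qed

lemma D2_partial_sum_eq_card:
  assumes f: "f \<in> D2 n" and u0: "length u0 = n" and nz: "f (u0 @ v) \<noteq> 0"
  shows "(\<Sum>u\<in>blists n. f (u @ v)) = of_nat (card {u \<in> blists n. ones u = ones u0}) * f (u0 @ v)"
proof -
  have "f (u @ v) = (if ones u = ones u0 then f (u0 @ v) else 0)" if u: "u \<in> blists n" for u
  proof (cases "ones u = ones u0")
    case True
    then show ?thesis
      using tprod_Lsym_left_ones[of f n "Lsym n" u u0 v] f u0 u by (simp add: blists_def D2_def)
  next
    case False
    have "f (u @ v) = 0"
    proof (rule ccontr)
      assume "f (u @ v) \<noteq> 0"
      then have "ones u + ones v = n" using D2_balanced[OF f \<open>f (u @ v) \<noteq> 0\<close>] by simp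
      moreover have "ones u0 + ones v = n" using D2_balanced[OF f nz] by simp
      ultimately show False using False by simp
    qed
    then show ?thesis using False by simp
  qed
  then have "(\<Sum>u\<in>blists n. f (u @ v)) = (\<Sum>u\<in>blists n. if ones u = ones u0 then f (u0 @ v) else 0)"
    by (intro sum.cong) simp_all
  also have "\<dots> = (\<Sum>u\<in>{u \<in> blists n. ones u = ones u0}. f (u0 @ v))"
    by (rule sum.inter_filter[symmetric]) simp
  finally show ?thesis by simp
qed

lemma D2_eq_0_if_pivot:
  assumes f: "f \<in> D2 n" and pivot: "f (pivot n) = 0"
  shows "f = 0"
proof -
  have main: "f (u0 @ v) = 0" if u0: "length u0 = n" for u0 v
  proof (rule ccontr)
    assume nz: "f (u0 @ v) \<noteq> 0"
    let ?S = "{u \<in> blists n. ones u = ones u0}"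
    have "u0 \<in> ?S" "finite ?S"
      using u0 by (auto simp: blists_def intro: finite_subset[OF _ finite_blists[of n]])
    then have "card ?S \<noteq> 0" by auto
    moreover have "of_nat (card ?S) * f (u0 @ v) = 0"
      using D2_partial_sum_eq_card[OF f u0 nz] D2_partial_sum_eq_0[OF f pivot] by simp
    ultimately show False using nz by (metis mult_eq_0_iff of_nat_eq_0_iff)
  qed
  show ?thesis
  proof
    fix x :: "bool list"
    show "f x = 0 x"
    proof (cases "length x < n")
      case True
      then show ?thesis using D2_tens[OF f] by (simp add: tens_def)
    next
      case False
      then have "x = take n x @ drop n x" "length (take n x) = n" by auto
      then show ?thesis using main by (metis zero_fun_apply)
    qed
  qed
qed

lemma D2_eq_span_omega: "D2 n = V.span {omega n}"
proof
  show "V.span {omega n} \<subseteq> D2 n"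
    using omega_D2 subspace_D2 by (intro V.span_minimal) auto
  show "D2 n \<subseteq> V.span {omega n}"
  proof
    fix f assume f: "f \<in> D2 n"
    define c where "c = f (pivot n) / omega n (pivot n)"
    have "f + cscale (- c) (omega n) \<in> D2 n"
      using f omega_D2 subspace_D2 unfolding V.subspace_def by blast
    moreover have "(f + cscale (- c) (omega n)) (pivot n) = 0"
      unfolding c_def using omega_pivot_neq_0 by (simp add: cscale_apply)
    ultimately have "f + cscale (- c) (omega n) = 0"
      by (rule D2_eq_0_if_pivot)
    then have "f = cscale c (omega n)"
      by (simp add: fun_eq_iff cscale_apply)
    then show "f \<in> V.span {omega n}"
      by (simp add: V.span_scale V.span_base)
  qed
qed

section \<open>\<open>E\<^sub>m\<close> as an orthogonal complement\<close>

lemma Lpow_1: "Lpow n (Suc 0) = Lsym n"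
proof -
  have "words n (Suc 0) = (\<lambda>a. [a]) ` {..n}"
    by (auto simp: words_def length_Suc_conv)
  then have "word_tensor n ` words n (Suc 0) = sym_basis n ` {..n}"
    by (simp add: image_image word_tensor_singleton del: word_tensor.simps)
  then show ?thesis
    by (simp only: Lpow_eq_span_word_tensor Lsym_eq_span_sym_basis)
qed

lemma omega_in_span_sym_basis:
  "omega n \<in> V.span {tensor n (sym_basis n a) (sym_basis n b) | a b. a \<le> n \<and> b \<le> n}"
proof -
  have "omega n \<in> tprod n (Lsym n) (Lsym n)"
    using omega_D2 by (simp add: D2_def)
  also have "\<dots> = V.span {tensor n a b |a b. a \<in> sym_basis n ` {..n} \<and> b \<in> sym_basis n ` {..n}}"
    unfolding Lsym_eq_span_sym_basis by (rule tprod_span_span)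
  also have "{tensor n a b |a b. a \<in> sym_basis n ` {..n} \<and> b \<in> sym_basis n ` {..n}} =
      {tensor n (sym_basis n a) (sym_basis n b) | a b. a \<le> n \<and> b \<le> n}"
    by auto
  finally show ?thesis .
qed

text \<open>The vectors \<open>e(w1) \<otimes> \<omega> \<otimes> e(w2)\<close>, which span the summands
  \<open>L^(i - 1) \<otimes> D\<^sub>2 \<otimes> L^(m - i - 1)\<close> in the definition of \<open>E\<^sub>m\<close>.\<close>

definition omega_word :: "nat \<Rightarrow> nat list \<Rightarrow> nat list \<Rightarrow> bool list \<Rightarrow> complex" where
  "omega_word n w1 w2 =
    tensor (n * length w1) (word_tensor n w1) (tensor (2 * n) (omega n) (word_tensor n w2))"

definition omega_gens :: "nat \<Rightarrow> nat \<Rightarrow> (bool list \<Rightarrow> complex) set" where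
  "omega_gens n m = (\<lambda>(w1, w2). omega_word n w1 w2) `
    {(w1, w2). set w1 \<subseteq> {..n} \<and> set w2 \<subseteq> {..n} \<and> length w1 + length w2 + 2 = m}"

lemma finite_omega_gens: "finite (omega_gens n m)"
proof -
  have "{(w1, w2). set w1 \<subseteq> {..n} \<and> set w2 \<subseteq> {..n} \<and> length w1 + length w2 + 2 = m} \<subseteq>
      (\<Union>k\<le>m. words n k) \<times> (\<Union>k\<le>m. words n k)"
    by (auto simp: words_def)
  then have "finite {(w1, w2). set w1 \<subseteq> {..n} \<and> set w2 \<subseteq> {..n} \<and> length w1 + length w2 + 2 = m}"
    by (rule finite_subset) simp
  then show ?thesis
    unfolding omega_gens_def by (rule finite_imageI)
qed

lemma omega_word_in_omega_gens:
  "set w1 \<subseteq> {..n} \<Longrightarrow> set w2 \<subseteq> {..n} \<Longrightarrow> length w1 + length w2 + 2 = m \<Longrightarrow>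
    omega_word n w1 w2 \<in> omega_gens n m"
  unfolding omega_gens_def by (rule image_eqI[where x = "(w1, w2)"]) auto

lemma omega_gens_eq_empty: "m < 2 \<Longrightarrow> omega_gens n m = {}"
  by (auto simp: omega_gens_def)

lemma word_tensor_snoc: "tensor (n * length w) (word_tensor n w) (sym_basis n a) = word_tensor n (w @ [a])"
  by (simp only: word_tensor_append word_tensor_singleton)

lemma omega_word_snoc:
  "tensor (n * (length w1 + length w2 + 2)) (omega_word n w1 w2) (sym_basis n a) =
    omega_word n w1 (w2 @ [a])"
proof -
  have "n * (length w1 + length w2 + 2) = n * length w1 + (2 * n + n * length w2)"
    by (simp add: algebra_simps)
  then have "tensor (n * (length w1 + length w2 + 2)) (omega_word n w1 w2) (sym_basis n a) =
      tensor (n * length w1) (word_tensor n w1)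
        (tensor (2 * n + n * length w2) (tensor (2 * n) (omega n) (word_tensor n w2)) (sym_basis n a))"
    by (simp only: omega_word_def tensor_assoc)
  also have "\<dots> = omega_word n w1 (w2 @ [a])"
    by (simp only: omega_word_def tensor_assoc[symmetric] word_tensor_snoc length_append_singleton)
  finally show ?thesis .
qed

lemma omega_word_in_Lpow:
  assumes "set w1 \<subseteq> {..n}" "set w2 \<subseteq> {..n}" "length w1 + length w2 + 2 = m"
  shows "omega_word n w1 w2 \<in> Lpow n m"
proof -
  define F where "F x = tensor (n * length w1) (word_tensor n w1) (tensor (2 * n) x (word_tensor n w2))" for x
  have lin: "clinear F"
    unfolding F_def by (rule clinearI) (simp_all add: tensor_def fun_eq_iff algebra_simps cscale_apply)
  have gen: "F s \<in> Lpow n m" if hs: "s \<in> {tensor n (sym_basis n a) (sym_basis n b) | a b. a \<le> n \<and> b \<le> n}" for s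
  proof -
    obtain a b where s: "s = tensor n (sym_basis n a) (sym_basis n b)" "a \<le> n" "b \<le> n"
      using hs by blast
    have "F s = tensor (n * length w1) (word_tensor n w1)
        (tensor n (sym_basis n a) (tensor n (sym_basis n b) (word_tensor n w2)))"
      unfolding F_def s(1) by (simp add: tensor_assoc mult_2)
    also have "\<dots> = word_tensor n (w1 @ [a, b] @ w2)"
      by (simp add: word_tensor_append)
    finally show ?thesis
      using assms s by (auto simp: Lpow_eq_span_word_tensor words_def intro: V.span_base)
  qed
  have "F (omega n) \<in> Lpow n m"
    using linear_image_span_subspace[OF lin omega_in_span_sym_basis gen] V.subspace_span
    by (simp add: Lpow_eq_span_word_tensor)
  then show ?thesis by (simp add: F_def omega_word_def)
qed

lemma omega_gens_subset_Lpow: "omega_gens n m \<subseteq> Lpow n m"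
  using omega_word_in_Lpow by (auto simp: omega_gens_def)

lemma tprod_D2_eq_span_omega_word:
  "tprod (n * k) (Lpow n k) (tprod (2 * n) (D2 n) (Lpow n l)) =
    V.span {omega_word n w1 w2 | w1 w2. w1 \<in> words n k \<and> w2 \<in> words n l}"
proof -
  have "tprod (n * k) (Lpow n k) (tprod (2 * n) (D2 n) (Lpow n l)) =
      V.span {tensor (n * k) a b | a b. a \<in> word_tensor n ` words n k \<and>
        b \<in> {tensor (2 * n) a b | a b. a \<in> {omega n} \<and> b \<in> word_tensor n ` words n l}}"
    unfolding Lpow_eq_span_word_tensor D2_eq_span_omega tprod_span_span ..
  also have "{tensor (n * k) a b | a b. a \<in> word_tensor n ` words n k \<and>
        b \<in> {tensor (2 * n) a b | a b. a \<in> {omega n} \<and> b \<in> word_tensor n ` words n l}} =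
      {omega_word n w1 w2 | w1 w2. w1 \<in> words n k \<and> w2 \<in> words n l}"
    by (auto simp: omega_word_def words_def)
  finally show ?thesis .
qed

lemma span_Espace_constraints_eq:
  assumes "2 \<le> m"
  shows "V.span (\<Union>i\<in>{1..m - 1}. tprod (n * (i - 1)) (Lpow n (i - 1)) (tprod (2 * n) (D2 n) (Lpow n (m - i - 1))))
    = V.span (omega_gens n m)"
proof -
  define G where "G i = {omega_word n w1 w2 | w1 w2. w1 \<in> words n (i - 1) \<and> w2 \<in> words n (m - i - 1)}" for i
  have "(\<Union>i\<in>{1..m - 1}. G i) = omega_gens n m"
  proof
    show "(\<Union>i\<in>{1..m - 1}. G i) \<subseteq> omega_gens n m"
      by (auto simp: G_def words_def intro!: omega_word_in_omega_gens)
    show "omega_gens n m \<subseteq> (\<Union>i\<in>{1..m - 1}. G i)"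
    proof
      fix g assume "g \<in> omega_gens n m"
      then obtain w1 w2 where g: "g = omega_word n w1 w2" "set w1 \<subseteq> {..n}" "set w2 \<subseteq> {..n}"
          "length w1 + length w2 + 2 = m"
        by (auto simp: omega_gens_def)
      then have "w1 \<in> words n (length w1 + 1 - 1)" "w2 \<in> words n (m - (length w1 + 1) - 1)"
        by (auto simp: words_def)
      then have "g \<in> G (length w1 + 1)"
        unfolding G_def using g(1) by blast
      then show "g \<in> (\<Union>i\<in>{1..m - 1}. G i)" using g(4) by force
    qed
  qed
  moreover have "V.span (\<Union>i\<in>{1..m - 1}. V.span (G i)) = V.span (\<Union>i\<in>{1..m - 1}. G i)"
    unfolding V.span_eq
  proof
    show "(\<Union>i\<in>{1..m - 1}. V.span (G i)) \<subseteq> V.span (\<Union>i\<in>{1..m - 1}. G i)"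
      by (intro UN_least V.span_mono) auto
    have "(\<Union>i\<in>{1..m - 1}. G i) \<subseteq> (\<Union>i\<in>{1..m - 1}. V.span (G i))"
      using V.span_superset by blast
    then show "(\<Union>i\<in>{1..m - 1}. G i) \<subseteq> V.span (\<Union>i\<in>{1..m - 1}. V.span (G i))"
      using V.span_superset by blast
  qed
  ultimately show ?thesis
    unfolding tprod_D2_eq_span_omega_word G_def by simp
qed

lemma Espace_eq_orth_omega_gens:
  "Espace n m = {f \<in> Lpow n m. \<forall>g\<in>omega_gens n m. cinner (n * m) f g = 0}"
proof (cases "m < 2")
  case True
  then consider "m = 0" | "m = Suc 0" by linarith
  then show ?thesis
  proof cases
    case 1
    then show ?thesis by (simp add: Espace_def omega_gens_eq_empty)
  next
    case 2
    then show ?thesis by (simp add: Espace_def omega_gens_eq_empty Lpow_1 del: Lpow.simps)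
  qed
next
  case False
  have "(\<forall>h\<in>V.span (omega_gens n m). cinner (n * m) f h = 0) \<longleftrightarrow>
      (\<forall>g\<in>omega_gens n m. cinner (n * m) f g = 0)" for f
    using cinner_span_right_eq_0[of "omega_gens n m" "n * m" f] V.span_base by blast
  moreover have "Espace n m = {f \<in> Lpow n m. \<forall>h\<in>V.span (omega_gens n m). cinner (n * m) f h = 0}"
    using False span_Espace_constraints_eq[of m n] by (simp add: Espace_def Let_def)
  ultimately show ?thesis by blast
qed

lemma Espace_eq_Lpow: "m < 2 \<Longrightarrow> Espace n m = Lpow n m"
  by (simp add: Espace_eq_orth_omega_gens omega_gens_eq_empty)

section \<open>Orthogonal complements in finite dimension\<close>

lemma obtain_finite_basis:
  assumes "U \<subseteq> V.span W" "finite W"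
  obtains B where "B \<subseteq> U" "V.independent B" "U \<subseteq> V.span B" "card B = V.dim U" "finite B"
proof -
  obtain B where B: "B \<subseteq> U" "V.independent B" "U \<subseteq> V.span B" "card B = V.dim U"
    by (rule V.basis_exists)
  moreover have "finite B"
    using V.independent_span_bound[OF assms(2) B(2)] B(1) assms(1) by auto
  ultimately show ?thesis using that by blast
qed

lemma card_le_dim_if_independent:
  assumes "U \<subseteq> V.span W" "finite W" "X \<subseteq> U" "V.independent X"
  shows "card X \<le> V.dim U"
proof -
  obtain B where B: "B \<subseteq> U" "U \<subseteq> V.span B" "card B = V.dim U" "finite B"
    using obtain_finite_basis[OF assms(1,2)] by metis
  show ?thesis
    using V.independent_span_bound[OF B(4) assms(4)] assms(3) B(2,3) by auto
qed

lemma dim_mono_if_finite_span: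
  assumes "A \<subseteq> B" "B \<subseteq> V.span W" "finite W"
  shows "V.dim A \<le> V.dim B"
proof -
  obtain BA where "BA \<subseteq> A" "V.independent BA" "card BA = V.dim A"
    by (meson V.basis_exists)
  then show ?thesis
    using card_le_dim_if_independent[OF assms(2,3), of BA] assms(1) by auto
qed

lemma subspace_orth:
  "V.subspace U \<Longrightarrow> V.subspace {f \<in> U. \<forall>y\<in>Y. cinner N f y = 0}"
  unfolding V.subspace_def by (auto simp: cinner_add_left cinner_scale_left)

lemma orth_projection_insert:
  assumes s: "s \<in> V.span Y" "\<forall>z\<in>Y. cinner N (q - s) z = 0"
    and t: "t \<in> V.span Y" "\<forall>z\<in>Y. cinner N (y - t) z = 0" and y: "y - t \<in> tens N"
  shows "\<exists>s'\<in>V.span (insert y Y). \<forall>z\<in>insert y Y. cinner N (q - s') z = 0"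
proof -
  have spY: "V.span Y \<subseteq> V.span (insert y Y)"
    by (rule V.span_mono) auto
  show ?thesis
  proof (cases "cinner N (y - t) (y - t) = 0")
    case True
    then have "y = t" using cinner_self_eq_0[OF y] by simp
    then have "cinner N (q - s) y = 0"
      using cinner_span_right_eq_0[of Y N "q - s" t] s(2) t(1) by simp
    then show ?thesis using s spY by blast
  next
    case False
    define y' where "y' = y - t"
    define s' where "s' = s + cscale (cinner N (q - s) y' / cinner N y' y') y'"
    have "y \<in> V.span (insert y Y)" "t \<in> V.span (insert y Y)"
      using spY t(1) by (auto intro: V.span_base)
    then have "y' \<in> V.span (insert y Y)"
      unfolding y'_def by (rule V.span_diff)
    then have s'_span: "s' \<in> V.span (insert y Y)"
      unfolding s'_def using spY s(1) by (intro V.span_add V.span_scale) auto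
    have orth_Y: "\<forall>z\<in>Y. cinner N (q - s') z = 0"
      using s(2) t(2) by (simp add: s'_def diff_add_eq_diff_diff_swap cinner_diff_left cinner_scale_left y'_def)
    then have "cinner N (q - s') t = 0"
      using cinner_span_right_eq_0[of Y N "q - s'" t] t(1) by simp
    moreover have "cinner N (q - s') y' = 0"
      unfolding s'_def diff_add_eq_diff_diff_swap cinner_diff_left cinner_scale_left
      using False by (simp add: y'_def)
    moreover have "y = y' + t"
      by (simp add: y'_def)
    ultimately have "cinner N (q - s') y = 0"
      by (simp add: cinner_add_right)
    then show ?thesis using orth_Y s'_span by blast
  qed
qed

lemma exists_orth_projection:
  assumes "finite Y" "Y \<subseteq> tens N" "q \<in> tens N"
  shows "\<exists>s\<in>V.span Y. \<forall>y\<in>Y. cinner N (q - s) y = 0"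
  using assms
proof (induction Y arbitrary: q rule: finite_induct)
  case empty
  then show ?case by (auto intro: V.span_zero)
next
  case (insert y Y)
  have YT: "Y \<subseteq> tens N" and yT: "y \<in> tens N" using insert.prems by auto
  obtain s where "s \<in> V.span Y" "\<forall>z\<in>Y. cinner N (q - s) z = 0"
    using insert.IH[OF YT insert.prems(2)] by blast
  moreover obtain t where "t \<in> V.span Y" "\<forall>z\<in>Y. cinner N (y - t) z = 0"
    using insert.IH[OF YT yT] by blast
  moreover have "y - t \<in> tens N"
    using yT span_subset_tens[OF YT] \<open>t \<in> V.span Y\<close> subspace_tens by (auto intro: V.subspace_diff)
  ultimately show ?case by (rule orth_projection_insert)
qed

lemma dim_le_dim_orth_Suc:
  assumes U: "V.subspace U" "U \<subseteq> V.span W" "finite W"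
  shows "V.dim U \<le> V.dim {f \<in> U. cinner N f y = 0} + 1"
proof (cases "\<forall>u\<in>U. cinner N u y = 0")
  case True
  then have "{f \<in> U. cinner N f y = 0} = U" by auto
  then show ?thesis by simp
next
  case False
  then obtain u0 where u0: "u0 \<in> U" "cinner N u0 y \<noteq> 0" by auto
  define K where "K = {f \<in> U. cinner N f y = 0}"
  obtain B where B: "B \<subseteq> K" "V.independent B" "K \<subseteq> V.span B" "card B = V.dim K" "finite B"
    using obtain_finite_basis[of K W] U(2,3) by (auto simp: K_def)
  have "U \<subseteq> V.span (insert u0 B)"
  proof
    fix u assume u: "u \<in> U"
    define c where "c = cinner N u y / cinner N u0 y"
    have "u - cscale c u0 \<in> K"
      using u u0 U(1) by (simp add: K_def c_def V.subspace_diff V.subspace_scale cinner_diff_left cinner_scale_left)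
    then have "u - cscale c u0 \<in> V.span (insert u0 B)"
      using B(3) V.span_mono[of B "insert u0 B"] by auto
    moreover have "cscale c u0 \<in> V.span (insert u0 B)"
      by (intro V.span_scale V.span_base) simp
    ultimately have "(u - cscale c u0) + cscale c u0 \<in> V.span (insert u0 B)"
      by (rule V.span_add)
    then show "u \<in> V.span (insert u0 B)" by simp
  qed
  then have "V.dim U \<le> card (insert u0 B)"
    using B(5) by (intro V.dim_le_card) auto
  also have "\<dots> \<le> card B + 1"
    using B(5) by (simp add: card_insert_if)
  finally show ?thesis
    using B(4) by (simp add: K_def)
qed

lemma dim_le_dim_orth_add_card:
  assumes "finite Y" "V.subspace U" "U \<subseteq> V.span W" "finite W"
  shows "V.dim U \<le> V.dim {f \<in> U. \<forall>y\<in>Y. cinner N f y = 0} + card Y"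
  using assms(1)
proof (induction Y rule: finite_induct)
  case empty
  then show ?case by simp
next
  case (insert y Y)
  define UY where "UY = {f \<in> U. \<forall>y\<in>Y. cinner N f y = 0}"
  have "V.subspace UY" "UY \<subseteq> V.span W"
    unfolding UY_def using subspace_orth[OF assms(2)] assms(3) by auto
  then have "V.dim UY \<le> V.dim {f \<in> UY. cinner N f y = 0} + 1"
    using assms(4) by (rule dim_le_dim_orth_Suc)
  moreover have "{f \<in> UY. cinner N f y = 0} = {f \<in> U. \<forall>y\<in>insert y Y. cinner N f y = 0}"
    by (auto simp: UY_def)
  ultimately show ?case using insert by (simp add: UY_def)
qed

lemma independent_Un:
  assumes "V.independent B" "V.independent Z" "finite B" "finite Z"
    and span_Int: "\<And>x. x \<in> V.span B \<Longrightarrow> x \<in> V.span Z \<Longrightarrow> x = 0"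
  shows "V.independent (B \<union> Z)" "B \<inter> Z = {}"
proof -
  show disj: "B \<inter> Z = {}"
    using span_Int V.span_base assms(1) V.dependent_zero by blast
  show "V.independent (B \<union> Z)"
  proof (rule V.independent_if_scalars_zero)
    fix c x assume s: "(\<Sum>x\<in>B \<union> Z. cscale (c x) x) = 0" and x: "x \<in> B \<union> Z"
    define eb ez where "eb = (\<Sum>x\<in>B. cscale (c x) x)" and "ez = (\<Sum>x\<in>Z. cscale (c x) x)"
    have "eb = - ez"
      using s unfolding eb_def ez_def eq_neg_iff_add_eq_0
      by (subst (asm) sum.union_disjoint) (use assms(3,4) disj in auto)
    moreover have "eb \<in> V.span B"
      unfolding eb_def by (intro V.span_sum V.span_scale V.span_base)
    moreover have "- ez \<in> V.span Z"
      unfolding ez_def by (intro V.span_neg V.span_sum V.span_scale V.span_base)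
    ultimately have "eb = 0" "ez = 0" using span_Int by (metis neg_equal_0_iff_equal)+
    then show "c x = 0"
      using x assms(1-4) unfolding eb_def ez_def by (auto intro: independent_sum_eq_0)
  qed (use assms in simp)
qed

text \<open>The orthogonal complement of \<open>Gs\<close> meets \<open>span Gs\<close> only in \<open>0\<close>, so a basis of the
  complement together with any independent \<open>Z \<subseteq> span Gs\<close> stays independent.\<close>

lemma dim_orth_add_card_le:
  assumes W: "finite W" "W \<subseteq> tens N" and Gs: "Gs \<subseteq> V.span W"
    and Z: "Z \<subseteq> V.span Gs" "V.independent Z"
  shows "V.dim {f \<in> V.span W. \<forall>g\<in>Gs. cinner N f g = 0} + card Z \<le> V.dim (V.span W)"
proof -
  define E where "E = {f \<in> V.span W. \<forall>g\<in>Gs. cinner N f g = 0}"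
  obtain B where B: "B \<subseteq> E" "V.independent B" "E \<subseteq> V.span B" "card B = V.dim E" "finite B"
    using obtain_finite_basis[of E W] W(1) by (auto simp: E_def)
  have Esub: "V.subspace E"
    unfolding E_def by (rule subspace_orth[OF V.subspace_span])
  have ZW: "Z \<subseteq> V.span W"
    using Z(1) V.span_minimal[OF Gs V.subspace_span] by auto
  have Zfin: "finite Z"
    using V.independent_span_bound[OF W(1) Z(2) ZW] by simp
  have "x = 0" if "x \<in> V.span B" "x \<in> V.span Z" for x
  proof -
    have "x \<in> E" "x \<in> V.span Gs"
      using that V.span_minimal[OF B(1) Esub]
        V.span_minimal[OF Z(1) V.subspace_span] by (auto simp: E_def)
    then have "cinner N x x = 0"
      using cinner_span_right_eq_0[of Gs N x x] by (auto simp: E_def)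
    moreover have "x \<in> tens N"
      using \<open>x \<in> E\<close> span_subset_tens[OF W(2)] by (auto simp: E_def)
    ultimately show ?thesis by (rule cinner_self_eq_0[rotated])
  qed
  then have "V.independent (B \<union> Z)" "B \<inter> Z = {}"
    using independent_Un[OF B(2) Z(2) B(5) Zfin] by blast+
  moreover have "B \<union> Z \<subseteq> V.span W"
    using B(1) ZW by (auto simp: E_def)
  ultimately show ?thesis
    using card_le_dim_if_independent[OF order_refl W(1), of "B \<union> Z"] B(4,5) Zfin
    by (simp add: E_def card_Un_disjoint)
qed

section \<open>The upper bound\<close>

fun word_value :: "nat \<Rightarrow> nat list \<Rightarrow> nat" where
  "word_value K [] = 0"
| "word_value K (a # w) = a * K ^ length w + word_value K w"

lemma word_value_append: "word_value K (u @ v) = word_value K u * K ^ length v + word_value K v"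
  by (induction u) (simp_all add: algebra_simps power_add)

definition split_0n :: "nat \<Rightarrow> nat list \<Rightarrow> nat list \<times> nat list" where
  "split_0n n w = (SOME p. w = fst p @ [0, n] @ snd p)"

lemma split_0n_eq: "sublist [0, n] w \<Longrightarrow> w = fst (split_0n n w) @ [0, n] @ snd (split_0n n w)"
  unfolding split_0n_def sublist_def by (rule someI_ex) auto

definition omega_word_at :: "nat \<Rightarrow> nat list \<Rightarrow> bool list \<Rightarrow> complex" where
  "omega_word_at n w = omega_word n (fst (split_0n n w)) (snd (split_0n n w))"

lemma omega_word_at_in_omega_gens:
  assumes "w \<in> words n m" "sublist [0, n] w"
  shows "omega_word_at n w \<in> omega_gens n m"
proof -
  define w1 w2 where "w1 = fst (split_0n n w)" and "w2 = snd (split_0n n w)"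
  have "w = w1 @ [0, n] @ w2"
    using split_0n_eq[OF assms(2)] by (simp add: w1_def w2_def)
  then have "set w1 \<subseteq> {..n}" "set w2 \<subseteq> {..n}" "length w1 + length w2 + 2 = m"
    using assms(1) by (auto simp: words_def)
  then show ?thesis
    unfolding omega_word_at_def w1_def[symmetric] w2_def[symmetric] by (rule omega_word_in_omega_gens)
qed

lemma omega_word_word_rep:
  assumes "set x1 \<subseteq> {..n}" "length x1 = length w1" "a \<le> n" "b \<le> n"
  shows "omega_word n w1 w2 (word_rep n (x1 @ [a, b] @ x2)) =
    word_tensor n w1 (word_rep n x1) * omega n (sym_rep n a @ sym_rep n b) * word_tensor n w2 (word_rep n x2)"
proof -
  have l: "length (word_rep n x1) = n * length w1" "length (sym_rep n a @ sym_rep n b) = 2 * n"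
    using assms length_word_rep by auto
  have "word_rep n (x1 @ [a, b] @ x2) = word_rep n x1 @ ((sym_rep n a @ sym_rep n b) @ word_rep n x2)"
    by simp
  then show ?thesis
    unfolding omega_word_def by (simp only: tensor_append[OF l(1)] tensor_append[OF l(2)] mult.assoc)
qed

lemma omega_word_word_rep_neq_0:
  assumes w: "set w1 \<subseteq> {..n}" "set w2 \<subseteq> {..n}" and w': "w' \<in> words n (length w1 + length w2 + 2)"
    and nz: "omega_word n w1 w2 (word_rep n w') \<noteq> 0"
  obtains a b where "w' = w1 @ [a, b] @ w2" "a + b = n"
proof -
  define x1 where "x1 = take (length w1) w'"
  have "length (drop (length w1) w') = length w2 + 2"
    using w' by (simp add: words_def)
  then obtain a b x2 where "drop (length w1) w' = a # b # x2" "length x2 = length w2"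
    by (metis Suc_length_conv add_2_eq_Suc' diff_Suc_Suc length_Cons)
  moreover have "w' = x1 @ drop (length w1) w'"
    by (simp add: x1_def)
  ultimately have w'_eq: "w' = x1 @ [a, b] @ x2" "length x1 = length w1" "length x2 = length w2"
    using w' by (auto simp: words_def x1_def)
  have s: "set x1 \<subseteq> {..n}" "a \<le> n" "b \<le> n" "set x2 \<subseteq> {..n}"
    using w' w'_eq(1) by (auto simp: words_def)
  have "word_tensor n w1 (word_rep n x1) * omega n (sym_rep n a @ sym_rep n b) *
      word_tensor n w2 (word_rep n x2) \<noteq> 0"
    using nz omega_word_word_rep[OF s(1) w'_eq(2) s(2,3)] w'_eq(1) by simp
  then have "w1 = x1" "w2 = x2" "omega n (sym_rep n a @ sym_rep n b) \<noteq> 0"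
    using word_tensor_word_rep[OF s(1), of w1] word_tensor_word_rep[OF s(4), of w2] w'_eq(2,3)
    by (auto split: if_splits)
  moreover have "a + b = n"
    using D2_balanced[OF omega_D2 \<open>omega n (sym_rep n a @ sym_rep n b) \<noteq> 0\<close>] by simp
  ultimately show ?thesis using that w'_eq(1) by blast
qed

text \<open>The generator of \<open>w\<^sub>1 @ [0, n] @ w\<^sub>2\<close> is nonzero at \<open>word_rep n w\<close> only for
  \<open>w = w\<^sub>1 @ [a, n - a] @ w\<^sub>2\<close>, and for \<open>a > 0\<close> such a word has larger value in base \<open>n + 1\<close>.\<close>

lemma independent_omega_word_at:
  assumes "n \<ge> 1"
  shows "V.independent (omega_word_at n ` {w \<in> words n m. sublist [0, n] w}) \<and>
    inj_on (omega_word_at n) {w \<in> words n m. sublist [0, n] w}"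
proof (rule independent_if_triangular[where p = "word_rep n" and key = "word_value (n + 1)"])
  show "finite {w \<in> words n m. sublist [0, n] w}" by simp
next
  fix w assume w: "w \<in> {w \<in> words n m. sublist [0, n] w}"
  define w1 w2 where "w1 = fst (split_0n n w)" and "w2 = snd (split_0n n w)"
  have weq: "w = w1 @ [0, n] @ w2"
    using split_0n_eq w by (simp add: w1_def w2_def)
  have s: "set w1 \<subseteq> {..n}" "set w2 \<subseteq> {..n}"
    using w weq by (auto simp: words_def)
  have "omega_word_at n w = omega_word n w1 w2"
    by (simp add: omega_word_at_def w1_def w2_def)
  then have "omega_word_at n w (word_rep n w) = omega n (pivot n)"
    using omega_word_word_rep[OF s(1) refl, of 0 n w2 w2] word_tensor_word_rep[OF s(1) refl]
      word_tensor_word_rep[OF s(2) refl] weq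
    by (simp add: sym_rep_def pivot_def)
  then show "omega_word_at n w (word_rep n w) \<noteq> 0"
    using omega_pivot_neq_0 by simp
next
  fix i j assume i: "i \<in> {w \<in> words n m. sublist [0, n] w}" and j: "j \<in> {w \<in> words n m. sublist [0, n] w}"
    and "i \<noteq> j" and nz: "omega_word_at n j (word_rep n i) \<noteq> 0"
  define w1 w2 where "w1 = fst (split_0n n j)" and "w2 = snd (split_0n n j)"
  have jeq: "j = w1 @ [0, n] @ w2"
    using split_0n_eq j by (simp add: w1_def w2_def)
  have "set w1 \<subseteq> {..n}" "set w2 \<subseteq> {..n}" "i \<in> words n (length w1 + length w2 + 2)"
    using i j jeq by (auto simp: words_def)
  then obtain a b where ab: "i = w1 @ [a, b] @ w2" "a + b = n"
    using omega_word_word_rep_neq_0 nz unfolding omega_word_at_def w1_def w2_def by blast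
  then have "a \<noteq> 0" using \<open>i \<noteq> j\<close> jeq by auto
  then have "0 < a * n" using assms by simp
  moreover have "a * (n + 1) + b = a * n + n" using ab(2) by (simp add: algebra_simps)
  ultimately have "n < a * (n + 1) + b" by linarith
  then show "word_value (n + 1) j < word_value (n + 1) i"
    unfolding jeq ab(1) word_value_append by simp
qed

definition avoid_words :: "nat \<Rightarrow> nat \<Rightarrow> nat list set" where
  "avoid_words n m = {w \<in> words n m. \<not> sublist [0, n] w}"

lemma dim_Espace_le_card_avoid_words:
  assumes "n \<ge> 1"
  shows "V.dim (Espace n m) \<le> card (avoid_words n m)"
proof -
  define C where "C = {w \<in> words n m. sublist [0, n] w}"
  have "V.dim (Espace n m) + card (omega_word_at n ` C) \<le> V.dim (Lpow n m)"
    unfolding Espace_eq_orth_omega_gens Lpow_eq_span_word_tensor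
  proof (rule dim_orth_add_card_le)
    show "word_tensor n ` words n m \<subseteq> tens (n * m)"
      using word_tensor_tens by (auto simp: words_def)
    show "omega_gens n m \<subseteq> V.span (word_tensor n ` words n m)"
      using omega_gens_subset_Lpow by (simp add: Lpow_eq_span_word_tensor)
    show "omega_word_at n ` C \<subseteq> V.span (omega_gens n m)"
      using omega_word_at_in_omega_gens by (auto simp: C_def intro: V.span_base)
    show "V.independent (omega_word_at n ` C)"
      using independent_omega_word_at[OF assms] by (simp add: C_def)
  qed simp
  moreover have "card (omega_word_at n ` C) = card C"
    using independent_omega_word_at[OF assms] by (simp add: C_def card_image)
  moreover have "card (avoid_words n m) + card C = (n + 1) ^ m"
    unfolding avoid_words_def C_def card_words[symmetric]
    by (subst card_Un_disjoint[symmetric]) (auto intro: arg_cong[where f = card])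
  ultimately show ?thesis
    using dim_Lpow[of n m] by simp
qed

section \<open>Words avoiding the factor \<open>[0, n]\<close>\<close>

lemma sublist_0n_Cons: "sublist [0, n] (c # w) \<longleftrightarrow> (c = 0 \<and> w \<noteq> [] \<and> hd w = n) \<or> sublist [0, n] w"
  by (cases w) (auto simp: sublist_Cons_right)

lemma avoid_words_0: "avoid_words n 0 = {[]}"
  by (auto simp: avoid_words_def words_def)

lemma avoid_words_1: "avoid_words n (Suc 0) = words n (Suc 0)"
  by (auto simp: avoid_words_def words_def length_Suc_conv sublist_0n_Cons)

text \<open>For \<open>n \<ge> 1\<close> the word \<open>n # w\<close> avoids \<open>[0, n]\<close> iff \<open>w\<close> does, so the words \<open>0 # n # w\<close>
  removed here are all of the form \<open>c # w'\<close> with \<open>w'\<close> avoiding.\<close>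

lemma avoid_words_Suc_Suc:
  assumes "n \<ge> 1"
  shows "avoid_words n (Suc (Suc m)) =
    (\<lambda>(c, w). c # w) ` ({..n} \<times> avoid_words n (Suc m)) - (\<lambda>w. 0 # n # w) ` avoid_words n m"
proof (intro set_eqI iffI)
  fix x assume x: "x \<in> avoid_words n (Suc (Suc m))"
  then obtain c w where "x = c # w" "c \<le> n" "w \<in> avoid_words n (Suc m)" "\<not> (c = 0 \<and> hd w = n)"
    by (auto simp: avoid_words_def words_Suc sublist_0n_Cons)
  then show "x \<in> (\<lambda>(c, w). c # w) ` ({..n} \<times> avoid_words n (Suc m)) - (\<lambda>w. 0 # n # w) ` avoid_words n m"
    by auto
next
  fix x assume "x \<in> (\<lambda>(c, w). c # w) ` ({..n} \<times> avoid_words n (Suc m)) - (\<lambda>w. 0 # n # w) ` avoid_words n m"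
  then obtain c w where x: "x = c # w" "c \<le> n" "w \<in> avoid_words n (Suc m)"
    and not_Y: "x \<notin> (\<lambda>w. 0 # n # w) ` avoid_words n m"
    by auto
  have "\<not> (c = 0 \<and> w \<noteq> [] \<and> hd w = n)"
  proof
    assume "c = 0 \<and> w \<noteq> [] \<and> hd w = n"
    then obtain w' where "c = 0" "w = n # w'" by (cases w) auto
    then have "w' \<in> avoid_words n m" using x(3) by (auto simp: avoid_words_def words_def sublist_0n_Cons)
    then show False using not_Y x(1) \<open>c = 0\<close> \<open>w = n # w'\<close> by auto
  qed
  then show "x \<in> avoid_words n (Suc (Suc m))"
    using x by (auto simp: avoid_words_def words_def sublist_0n_Cons)
qed

lemma card_avoid_words_Suc_Suc:
  assumes "n \<ge> 1"
  shows "card (avoid_words n (Suc (Suc m))) + card (avoid_words n m) =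
    (n + 1) * card (avoid_words n (Suc m))"
proof -
  define X Y where "X = (\<lambda>(c, w). c # w) ` ({..n} \<times> avoid_words n (Suc m))"
    and "Y = (\<lambda>w. 0 # n # w) ` avoid_words n m"
  have fin: "finite (avoid_words n k)" for k
    by (simp add: avoid_words_def)
  have "Y \<subseteq> X"
    using assms by (force simp: X_def Y_def avoid_words_def words_def sublist_0n_Cons)
  moreover have "card X = (n + 1) * card (avoid_words n (Suc m))"
    unfolding X_def by (subst card_image) (auto simp: inj_on_def card_cartesian_product)
  moreover have "card Y = card (avoid_words n m)"
    unfolding Y_def by (subst card_image) (auto simp: inj_on_def)
  moreover have "finite X" by (simp add: X_def fin)
  ultimately show ?thesis
    using avoid_words_Suc_Suc[OF assms, of m] card_Diff_subset[of Y X] card_mono[of X Y]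
    by (simp add: X_def Y_def fin)
qed

lemma dseq_eq_card_avoid_words: "n \<ge> 1 \<Longrightarrow> dseq n m = int (card (avoid_words n m))"
proof (induction n m rule: dseq.induct)
  case (3 n m)
  then show ?case
    using card_avoid_words_Suc_Suc[OF "3.prems", of m]
    by (simp add: algebra_simps flip: of_nat_add of_nat_mult)
qed (simp_all add: avoid_words_0 avoid_words_1 card_words)

section \<open>The lower bound\<close>

lemma independent_tensor:
  assumes fin: "finite B" "finite A" and B: "B \<subseteq> tens N" "V.independent B" and A: "V.independent A"
  shows "V.independent ((\<lambda>(b, a). tensor N b a) ` (B \<times> A)) \<and> inj_on (\<lambda>(b, a). tensor N b a) (B \<times> A)"
proof (rule independent_family_if_scalars_zero)
  show "finite (B \<times> A)" using fin by simp
  fix c assume comb: "(\<Sum>p\<in>B \<times> A. cscale (c p) (case p of (b, a) \<Rightarrow> tensor N b a)) = 0"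
  have coeff: "(\<Sum>b\<in>B. c (b, a) * b u) = 0" if "a \<in> A" "length u = N" for a u
  proof -
    have "(\<Sum>a\<in>A. cscale (\<Sum>b\<in>B. c (b, a) * b u) a) = 0"
    proof
      fix v
      have "0 = (\<Sum>p\<in>B \<times> A. cscale (c p) (case p of (b, a) \<Rightarrow> tensor N b a)) (u @ v)"
        using comb by simp
      also have "\<dots> = (\<Sum>p\<in>B \<times> A. c p * (fst p u * snd p v))"
        using \<open>length u = N\<close> unfolding sum_fun_apply
        by (intro sum.cong refl) (auto simp: cscale_apply tensor_append)
      also have "\<dots> = (\<Sum>b\<in>B. \<Sum>a\<in>A. c (b, a) * (b u * a v))"
        unfolding sum.cartesian_product by (simp add: case_prod_beta)
      also have "\<dots> = (\<Sum>a\<in>A. cscale (\<Sum>b\<in>B. c (b, a) * b u) a) v"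
        by (subst sum.swap) (simp add: sum_fun_apply cscale_apply sum_distrib_right mult.assoc)
      finally show "(\<Sum>a\<in>A. cscale (\<Sum>b\<in>B. c (b, a) * b u) a) v = 0 v" by simp
    qed
    then show ?thesis
      by (rule independent_sum_eq_0[OF A fin(2) _ that(1), where u = "\<lambda>a. \<Sum>b\<in>B. c (b, a) * b u"])
  qed
  have "(\<Sum>b\<in>B. cscale (c (b, a)) b) = 0" if "a \<in> A" for a
  proof
    fix u
    show "(\<Sum>b\<in>B. cscale (c (b, a)) b) u = 0 u"
      using coeff[OF that, of u] B(1) by (cases "length u = N") (auto simp: sum_fun_apply cscale_apply tens_def subset_iff intro!: sum.neutral)
  qed
  then show "\<forall>p\<in>B \<times> A. c p = 0"
    using independent_sum_eq_0[OF B(2) fin(1), where u = "\<lambda>b. c (b, _)"] by fast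
qed

lemma dim_Lsym: "V.dim (Lsym n) = n + 1"
  using dim_Lpow[of n 1] by (simp add: Lpow_1 del: Lpow.simps)

lemma dim_tprod:
  assumes U: "V.subspace U" "U \<subseteq> V.span W" "finite W" "U \<subseteq> tens N"
    and U': "V.subspace U'" "U' \<subseteq> V.span W'" "finite W'"
  shows "V.dim (tprod N U U') = V.dim U * V.dim U'"
proof -
  obtain B where B: "B \<subseteq> U" "V.independent B" "U \<subseteq> V.span B" "card B = V.dim U" "finite B"
    using obtain_finite_basis[OF U(2,3)] by blast
  obtain A where A: "A \<subseteq> U'" "V.independent A" "U' \<subseteq> V.span A" "card A = V.dim U'" "finite A"
    using obtain_finite_basis[OF U'(2,3)] by blast
  have "U = V.span B" "U' = V.span A"
    using B A U(1) U'(1) by (simp_all add: V.span_subspace)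
  moreover have "{tensor N b a |b a. b \<in> B \<and> a \<in> A} = (\<lambda>(b, a). tensor N b a) ` (B \<times> A)"
    by auto
  ultimately have "tprod N U U' = V.span ((\<lambda>(b, a). tensor N b a) ` (B \<times> A))"
    by (simp add: tprod_span_span)
  moreover have "V.independent ((\<lambda>(b, a). tensor N b a) ` (B \<times> A))"
    "inj_on (\<lambda>(b, a). tensor N b a) (B \<times> A)"
    using independent_tensor[OF B(5) A(5) _ B(2) A(2)] B(1) U(4) by auto
  ultimately show ?thesis
    using A(4) B(4) by (simp add: V.dim_eq_card_independent card_image card_cartesian_product)
qed

lemma subspace_Lpow: "V.subspace (Lpow n m)"
  by (simp add: Lpow_eq_span_word_tensor V.subspace_span)

lemma Lpow_tens: "Lpow n m \<subseteq> tens (n * m)"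
  unfolding Lpow_eq_span_word_tensor
  by (rule span_subset_tens) (use word_tensor_tens in \<open>auto simp: words_def\<close>)

lemma Espace_subset_Lpow: "Espace n m \<subseteq> Lpow n m"
  by (auto simp: Espace_eq_orth_omega_gens)

lemma subspace_Espace: "V.subspace (Espace n m)"
  unfolding Espace_eq_orth_omega_gens by (rule subspace_orth[OF subspace_Lpow])

lemma tensor_add_left: "tensor N (a + b) c = tensor N a c + tensor N b c"
  by (simp add: tensor_def fun_eq_iff distrib_right)

lemma tprod_mono: "A \<subseteq> A' \<Longrightarrow> B \<subseteq> B' \<Longrightarrow> tprod N A B \<subseteq> tprod N A' B'"
  unfolding tprod_eq_span_tensor by (intro V.span_mono) blast

lemma tprod_Lpow_Lsym: "tprod (n * m) (Lpow n m) (Lsym n) = Lpow n (Suc m)"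
proof -
  have "{tensor (n * m) a b |a b. a \<in> word_tensor n ` words n m \<and> b \<in> sym_basis n ` {..n}} =
      word_tensor n ` words n (Suc m)" (is "?L = ?R")
  proof
    show "?L \<subseteq> ?R"
    proof
      fix x assume "x \<in> ?L"
      then obtain w c where "w \<in> words n m" "c \<le> n"
        "x = tensor (n * m) (word_tensor n w) (sym_basis n c)"
        by auto
      then have "x = word_tensor n (w @ [c])" "w @ [c] \<in> words n (Suc m)"
        using word_tensor_snoc[of n w c] by (auto simp: words_def)
      then show "x \<in> ?R" by blast
    qed
    show "?R \<subseteq> ?L"
    proof
      fix x assume "x \<in> ?R"
      then obtain w where w: "w \<in> words n (Suc m)" "x = word_tensor n w" by blast
      then have "w \<noteq> []" by (auto simp: words_def)
      have "last w \<in> set w"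
        using \<open>w \<noteq> []\<close> by simp
      then have "butlast w \<in> words n m" "last w \<le> n"
        using w(1) by (auto simp: words_def subset_iff dest: in_set_butlastD)
      moreover have "x = tensor (n * m) (word_tensor n (butlast w)) (sym_basis n (last w))"
        using w(2) arg_cong[OF append_butlast_last_id[OF \<open>w \<noteq> []\<close>], of "word_tensor n"]
          word_tensor_snoc[of n "butlast w" "last w"] \<open>butlast w \<in> words n m\<close>
        by (simp add: words_def)
      ultimately show "x \<in> ?L" by blast
    qed
  qed
  then show ?thesis
    by (simp add: Lpow_eq_span_word_tensor Lsym_eq_span_sym_basis tprod_span_span del: Lpow.simps)
qed

lemma Lpow_eq_Espace_plus_span_omega_gens:
  assumes "q \<in> Lpow n m"
  obtains p s where "p \<in> Espace n m" "s \<in> V.span (omega_gens n m)" "q = p + s"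
proof -
  have G: "omega_gens n m \<subseteq> tens (n * m)"
    using omega_gens_subset_Lpow Lpow_tens by blast
  obtain s where s: "s \<in> V.span (omega_gens n m)" "\<forall>g\<in>omega_gens n m. cinner (n * m) (q - s) g = 0"
    using exists_orth_projection[OF finite_omega_gens G] assms Lpow_tens by blast
  moreover have "s \<in> Lpow n m"
    using s(1) V.span_minimal[OF omega_gens_subset_Lpow subspace_Lpow] by blast
  then have "q - s \<in> Lpow n m"
    using assms subspace_Lpow by (simp add: V.subspace_diff)
  ultimately show ?thesis
    using that[of "q - s" s] by (simp add: Espace_eq_orth_omega_gens)
qed

lemma cinner_tprod_Espace_tensor_omega_gens:
  assumes "f \<in> tprod (n * m) (Espace n m) B" "g \<in> omega_gens n m"
  shows "cinner (n * m + N) f (tensor (n * m) g x) = 0"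
proof (rule cinner_span_left_eq_0)
  show "f \<in> V.span {tensor (n * m) a b |a b. a \<in> Espace n m \<and> b \<in> B}"
    using assms(1) by (simp add: tprod_eq_span_tensor)
  fix y assume "y \<in> {tensor (n * m) a b |a b. a \<in> Espace n m \<and> b \<in> B}"
  then obtain a b where "y = tensor (n * m) a b" "a \<in> Espace n m" by blast
  then show "cinner (n * m + N) y (tensor (n * m) g x) = 0"
    using assms(2) by (simp add: cinner_tensor Espace_eq_orth_omega_gens)
qed

text \<open>Expanding \<open>\<omega>\<close> in the basis \<open>e(a) \<otimes> e(b)\<close> turns \<open>g \<otimes> \<omega>\<close>, for a generator \<open>g\<close> of
  length \<open>m\<close>, into a combination of \<open>g' \<otimes> e(b)\<close> with \<open>g' = g \<otimes> e(a)\<close> a generator of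
  length \<open>m + 1\<close>.\<close>

lemma cinner_tprod_Espace_tensor_omega:
  assumes f: "f \<in> tprod (n * Suc m) (Espace n (Suc m)) B" and s: "s \<in> V.span (omega_gens n m)"
  shows "cinner (n * Suc (Suc m)) f (tensor (n * m) s (omega n)) = 0"
proof -
  let ?T = "{h. cinner (n * Suc (Suc m)) f h = 0}"
  have "tensor (n * m) s (omega n) \<in> ?T"
  proof (rule linear_image_span_subspace[OF linear_tensor_left s _ subspace_cinner_right_eq_0])
    fix g assume "g \<in> omega_gens n m"
    then obtain u1 u2 where g: "g = omega_word n u1 u2" "set u1 \<subseteq> {..n}" "set u2 \<subseteq> {..n}"
        "length u1 + length u2 + 2 = m"
      by (auto simp: omega_gens_def)
    show "tensor (n * m) g (omega n) \<in> ?T"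
    proof (rule linear_image_span_subspace[OF linear_tensor_right omega_in_span_sym_basis _
          subspace_cinner_right_eq_0])
      fix x assume "x \<in> {tensor n (sym_basis n a) (sym_basis n b) |a b. a \<le> n \<and> b \<le> n}"
      then obtain a b where x: "x = tensor n (sym_basis n a) (sym_basis n b)" "a \<le> n" by blast
      have "tensor (n * m) g (sym_basis n a) = omega_word n u1 (u2 @ [a])"
        using omega_word_snoc[of n u1 u2 a] g(1) by (simp add: g(4)[symmetric])
      then have "tensor (n * m) g x = tensor (n * Suc m) (omega_word n u1 (u2 @ [a])) (sym_basis n b)"
        by (simp add: x(1) tensor_assoc add.commute)
      moreover have "omega_word n u1 (u2 @ [a]) \<in> omega_gens n (Suc m)"
        using g x(2) by (intro omega_word_in_omega_gens) auto
      ultimately show "tensor (n * m) g x \<in> ?T"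
        using cinner_tprod_Espace_tensor_omega_gens[OF f, of _ n] by (simp add: add.commute)
    qed
  qed
  then show ?thesis by simp
qed

text \<open>A vector of \<open>E(m + 1) \<otimes> L\<close> is orthogonal to all generators of length \<open>m + 2\<close> except
  those with \<open>\<omega>\<close> in the last two factors, and by the decomposition
  \<open>L^m = E(m) + span (generators)\<close> only the constraints \<open>E(m) \<otimes> \<omega>\<close> remain.\<close>

lemma tprod_Espace_Lsym_orth_subset_Espace:
  "{f \<in> tprod (n * Suc m) (Espace n (Suc m)) (Lsym n).
      \<forall>p\<in>Espace n m. cinner (n * Suc (Suc m)) f (tensor (n * m) p (omega n)) = 0}
    \<subseteq> Espace n (Suc (Suc m))"
proof safe
  fix f assume f: "f \<in> tprod (n * Suc m) (Espace n (Suc m)) (Lsym n)"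
    and orth: "\<forall>p\<in>Espace n m. cinner (n * Suc (Suc m)) f (tensor (n * m) p (omega n)) = 0"
  have "f \<in> Lpow n (Suc (Suc m))"
    using f tprod_mono[OF Espace_subset_Lpow order_refl] tprod_Lpow_Lsym by blast
  moreover have "cinner (n * Suc (Suc m)) f g = 0" if hg: "g \<in> omega_gens n (Suc (Suc m))" for g
  proof -
    obtain w1 w2 where g: "g = omega_word n w1 w2" "set w1 \<subseteq> {..n}" "set w2 \<subseteq> {..n}"
        "length w1 + length w2 = m"
      using hg by (auto simp: omega_gens_def)
    show ?thesis
    proof (cases w2 rule: rev_exhaust)
      case Nil
      then have g': "g = tensor (n * m) (word_tensor n w1) (omega n)"
        using g omega_tens[of n] by (simp add: omega_word_def tensor_unitv_right mult_2)
      have "word_tensor n w1 \<in> Lpow n m"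
        using g Nil by (auto simp: Lpow_eq_span_word_tensor words_def intro: V.span_base)
      then obtain p s where "p \<in> Espace n m" "s \<in> V.span (omega_gens n m)" "word_tensor n w1 = p + s"
        by (rule Lpow_eq_Espace_plus_span_omega_gens)
      then show ?thesis
        using orth cinner_tprod_Espace_tensor_omega[OF f]
        by (simp add: g' tensor_add_left cinner_add_right)
    next
      case (snoc w2' a)
      then have "g = tensor (n * Suc m) (omega_word n w1 w2') (sym_basis n a)"
        using g omega_word_snoc[of n w1 w2' a] by simp
      moreover have "omega_word n w1 w2' \<in> omega_gens n (Suc m)"
        using g snoc by (intro omega_word_in_omega_gens) auto
      ultimately show ?thesis
        using cinner_tprod_Espace_tensor_omega_gens[OF f, of _ n] by (simp add: add.commute)
    qed
  qed
  ultimately show "f \<in> Espace n (Suc (Suc m))"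
    by (simp add: Espace_eq_orth_omega_gens)
qed

lemma Espace_subset_span_word_tensor: "Espace n m \<subseteq> V.span (word_tensor n ` words n m)"
  using Espace_subset_Lpow by (simp add: Lpow_eq_span_word_tensor)

lemma dim_tprod_Espace_Lsym: "V.dim (tprod (n * m) (Espace n m) (Lsym n)) = V.dim (Espace n m) * (n + 1)"
proof -
  have "Espace n m \<subseteq> tens (n * m)"
    using Espace_subset_Lpow Lpow_tens by blast
  then show ?thesis
    using dim_tprod[OF subspace_Espace Espace_subset_span_word_tensor finite_imageI[OF finite_words] _
        subspace_Lsym Lsym_eq_span_sym_basis[THEN equalityD1] finite_imageI[OF finite_atMost]]
    by (simp add: dim_Lsym)
qed

lemma tprod_Espace_Lsym_subset_Lpow: "tprod (n * m) (Espace n m) (Lsym n) \<subseteq> Lpow n (Suc m)"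
  using tprod_mono[OF Espace_subset_Lpow order_refl] tprod_Lpow_Lsym by blast

lemma dim_Espace_Suc_Suc_ge:
  "(n + 1) * V.dim (Espace n (Suc m)) \<le> V.dim (Espace n (Suc (Suc m))) + V.dim (Espace n m)"
proof -
  define T where "T = tprod (n * Suc m) (Espace n (Suc m)) (Lsym n)"
  have fin: "finite (word_tensor n ` words n k)" for k
    by simp
  obtain C where C: "C \<subseteq> Espace n m" "V.independent C" "Espace n m \<subseteq> V.span C"
      "card C = V.dim (Espace n m)" "finite C"
    by (rule obtain_finite_basis[OF Espace_subset_span_word_tensor fin])
  have T_span: "T \<subseteq> V.span (word_tensor n ` words n (Suc (Suc m)))"
    using tprod_Espace_Lsym_subset_Lpow[of n "Suc m"] unfolding T_def
    by (simp only: Lpow_eq_span_word_tensor)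
  have subspace_T: "V.subspace T"
    by (simp add: T_def tprod_eq_span_tensor V.subspace_span)
  define Y where "Y = (\<lambda>c. tensor (n * m) c (omega n)) ` C"
  have "V.dim T \<le> V.dim {f \<in> T. \<forall>y\<in>Y. cinner (n * Suc (Suc m)) f y = 0} + card Y"
    using C(5) by (intro dim_le_dim_orth_add_card[OF _ subspace_T T_span fin]) (simp add: Y_def)
  also have "V.dim {f \<in> T. \<forall>y\<in>Y. cinner (n * Suc (Suc m)) f y = 0} \<le> V.dim (Espace n (Suc (Suc m)))"
  proof (rule dim_mono_if_finite_span[OF _ Espace_subset_span_word_tensor fin])
    have "tensor (n * m) p (omega n) \<in> {h. cinner (n * Suc (Suc m)) f h = 0}"
      if orth: "\<forall>y\<in>Y. cinner (n * Suc (Suc m)) f y = 0" and p: "p \<in> Espace n m" for f p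
    proof (rule linear_image_span_subspace[OF linear_tensor_left _ _ subspace_cinner_right_eq_0])
      show "p \<in> V.span C" using p C(3) by blast
      show "tensor (n * m) c (omega n) \<in> {h. cinner (n * Suc (Suc m)) f h = 0}" if "c \<in> C" for c
        using orth that by (simp add: Y_def)
    qed
    then show "{f \<in> T. \<forall>y\<in>Y. cinner (n * Suc (Suc m)) f y = 0} \<subseteq> Espace n (Suc (Suc m))"
      using tprod_Espace_Lsym_orth_subset_Espace[of n m] unfolding T_def by blast
  qed
  moreover have "card Y \<le> V.dim (Espace n m)"
    unfolding Y_def C(4)[symmetric] by (rule card_image_le[OF C(5)])
  ultimately show ?thesis
    using dim_tprod_Espace_Lsym[of n "Suc m"] by (simp add: T_def mult.commute)
qed

theorem dim_Espace_eq_card_avoid_words: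
  "n \<ge> 1 \<Longrightarrow> V.dim (Espace n m) = card (avoid_words n m)"
proof (induction n m rule: dseq.induct)
  case (1 n)
  then show ?case
    using dim_Lpow[of n 0] by (simp add: Espace_eq_Lpow avoid_words_0 del: Lpow.simps)
next
  case (2 n)
  then show ?case
    using dim_Lpow[of n 1] by (simp add: Espace_eq_Lpow avoid_words_1 card_words del: Lpow.simps)
next
  case (3 n m)
  then have "card (avoid_words n (Suc (Suc m))) \<le> V.dim (Espace n (Suc (Suc m)))"
    using dim_Espace_Suc_Suc_ge[of n m] card_avoid_words_Suc_Suc[OF "3.prems", of m] by simp
  then show ?case
    using dim_Espace_le_card_avoid_words[OF "3.prems"] by (rule antisym[rotated])
qed

theorem lemma3p8:
  fixes n m :: nat
  assumes "n \<ge> 1"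
  shows "int (cdim (Espace n m)) = dseq n m"
  using dim_Espace_eq_card_avoid_words[OF assms] dseq_eq_card_avoid_words[OF assms] by simp

end
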